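(* Let $\lambda$ be a partition with at most $n$ parts. The interpolation ASEP polynomials $\{f^*_\mu:\mu\in S_n(\lambda)\}$ form a basis of $V^*_\lambda$. Consequently $\{f^*_\mu:\mu\in\mathbb{N}^n\}$ is a basis of the polynomial ring $\mathbb{Q}(q,t)[x_1,\dots,x_n]$.
   Context: Polynomials are in $x_1,\dots,x_n$ over $\mathbb{Q}(q,t)$; $\mathcal{P}_n^{(d)}$ denotes polynomials of degree at most $d$. For $\mu\in\mathbb{N}^n$ let $k_i(\mu)=\#\{j<i:\mu_j>\mu_i\}+\#\{j>i:\mu_j\ge\mu_i\}$ and $\widetilde\mu=(q^{\mu_1}t^{-k_1(\mu)},\dots,q^{\mu_n}t^{-k_n(\mu)})$. For $\mu\in\mathbb{N}^n$, $|\mu|=d$, $E^*_\mu$ is the unique polynomial in $\mathcal{P}_n^{(d)}$ with coefficient of $x^\mu$ equal to $1$ and $E^*_\mu(\widetilde\nu)=0$ for all $\nu\in\mathbb{N}^n$, $|\nu|\le d$, $\nu\ne\mu$. $S_n$ acts on compositions by $\sigma\cdot\mu=(\mu_{\sigma^{-1}(1)},\dots,\mu_{\sigma^{-1}(n)})$ and on polynomials by permuting variables; $s_i=(i,i+1)$; $T_i=t-\frac{tx_i-x_{i+1}}{x_i-x_{i+1}}(1-s_i)$; $T_\sigma=T_{i_1}\cdots T_{i_\ell}$ for a reduced word. $S_n(\lambda)$ is the set of rearrangements of $\lambda$; for $\mu\in S_n(\lambda)$, $\sigma_\mu$ is the shortest permutation with $\sigma_\mu(\lambda)=\mu$, and $f^*_\mu=T_{\sigma_\mu}E^*_\lambda$.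 For a partition $\lambda$ of size $d$, $V^*_\lambda=\{f\in\mathcal{P}_n^{(d)}: f(\widetilde\nu)=0\ \forall\nu\in\mathbb{N}^n, |\nu|\le|\lambda|, \nu\notin S_n(\lambda)\}$. *)

theory Defs
  imports "HOL-Library.Poly_Mapping" "HOL-Library.Multiset"
    "HOL-Computational_Algebra.Polynomial" "HOL-Computational_Algebra.Fraction_Field"
begin

text \<open>Q(q,t) is the fraction field of Q[q][t] = rat poly poly; q is the inner
  indeterminate, t the outer one.\<close>
type_synonym K = "rat poly poly fract"

definition qq :: K where "qq = Fract [:[:0, 1:]:] 1"
definition tt :: K where "tt = Fract [:0, 1:] 1"

text \<open>A polynomial is a finitely supported map from exponent vectors to coefficients.
  Variables are indexed from 0 (x_(i+1) of the paper is index i).\<close>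
type_synonym mpoly = "(nat \<Rightarrow>\<^sub>0 nat) \<Rightarrow>\<^sub>0 K"

definition var :: "nat \<Rightarrow> mpoly" where
  "var i = Poly_Mapping.single (Poly_Mapping.single i 1) 1"

definition mconst :: "K \<Rightarrow> mpoly" where
  "mconst c = Poly_Mapping.single 0 c"

definition scal :: "K \<Rightarrow> mpoly \<Rightarrow> mpoly" where
  "scal c f = mconst c * f"

definition expo :: "nat list \<Rightarrow> (nat \<Rightarrow>\<^sub>0 nat)" where
  "expo mu = Poly_Mapping.nth mu"

definition mcoeff :: "mpoly \<Rightarrow> nat list \<Rightarrow> K" where
  "mcoeff f mu = Poly_Mapping.lookup f (expo mu)"

definition mdeg :: "(nat \<Rightarrow>\<^sub>0 nat) \<Rightarrow> nat" where
  "mdeg m = (\<Sum>i\<in>Poly_Mapping.keys m. Poly_Mapping.lookup m i)"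

definition polys :: "nat \<Rightarrow> mpoly set" where
  "polys n = {f. \<forall>m\<in>Poly_Mapping.keys f. Poly_Mapping.keys m \<subseteq> {..<n}}"

definition polys_deg :: "nat \<Rightarrow> nat \<Rightarrow> mpoly set" where
  "polys_deg n d = {f \<in> polys n. \<forall>m\<in>Poly_Mapping.keys f. mdeg m \<le> d}"

definition eval :: "mpoly \<Rightarrow> K list \<Rightarrow> K" where
  "eval f v = (\<Sum>m\<in>Poly_Mapping.keys f. Poly_Mapping.lookup f m * (\<Prod>i\<in>Poly_Mapping.keys m. (v ! i) ^ Poly_Mapping.lookup m i))"

definition comps :: "nat \<Rightarrow> nat list set" where
  "comps n = {mu. length mu = n}"

definition kk :: "nat list \<Rightarrow> nat \<Rightarrow> nat" where
  "kk mu i = card {j. j < i \<and> mu ! j > mu ! i}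
           + card {j. i < j \<and> j < length mu \<and> mu ! j \<ge> mu ! i}"

definition tilde :: "nat list \<Rightarrow> K list" where
  "tilde mu = map (\<lambda>i. qq ^ (mu ! i) * (inverse tt) ^ kk mu i) [0..<length mu]"

definition Estar :: "nat list \<Rightarrow> mpoly" where
  "Estar mu = (THE f. f \<in> polys_deg (length mu) (sum_list mu) \<and> mcoeff f mu = 1 \<and>
      (\<forall>nu \<in> comps (length mu). sum_list nu \<le> sum_list mu \<and> nu \<noteq> mu
          \<longrightarrow> eval f (tilde nu) = 0))"

definition swp :: "nat \<Rightarrow> nat \<Rightarrow> nat" where
  "swp i j = (if j = i then Suc i else if j = Suc i then i else j)"

definition swap_poly :: "nat \<Rightarrow> mpoly \<Rightarrow> mpoly" where
  "swap_poly i f = Poly_Mapping.map_key (\<lambda>m. Poly_Mapping.map_key (swp i) m) f"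

definition ddiff :: "nat \<Rightarrow> mpoly \<Rightarrow> mpoly" where
  "ddiff i f = (THE g. (var i - var (Suc i)) * g = f - swap_poly i f)"

definition Top :: "nat \<Rightarrow> mpoly \<Rightarrow> mpoly" where
  "Top i f = scal tt f - (scal tt (var i) - var (Suc i)) * ddiff i f"

definition Tword :: "nat list \<Rightarrow> mpoly \<Rightarrow> mpoly" where
  "Tword w f = foldr Top w f"

definition words :: "nat \<Rightarrow> nat list set" where
  "words n = {w. \<forall>i \<in> set w. Suc i < n}"

definition wperm :: "nat list \<Rightarrow> nat \<Rightarrow> nat" where
  "wperm w = foldr (\<lambda>i s. swp i \<circ> s) w id"

definition act :: "(nat \<Rightarrow> nat) \<Rightarrow> nat list \<Rightarrow> nat list" where
  "act s mu = map (\<lambda>i. mu ! (inv s i)) [0..<length mu]"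

definition redword :: "nat list \<Rightarrow> nat list \<Rightarrow> nat list" where
  "redword lam mu = (SOME w. w \<in> words (length lam) \<and> act (wperm w) lam = mu \<and>
      (\<forall>w' \<in> words (length lam). act (wperm w') lam = mu \<longrightarrow> length w \<le> length w'))"

definition rearr :: "nat list \<Rightarrow> nat list set" where
  "rearr lam = {mu. length mu = length lam \<and> mset mu = mset lam}"

definition fstar :: "nat list \<Rightarrow> mpoly" where
  "fstar mu = Tword (redword (rev (sort mu)) mu) (Estar (rev (sort mu)))"

definition is_partition :: "nat list \<Rightarrow> bool" where
  "is_partition lam \<longleftrightarrow> sorted (rev lam)"

definition Vstar :: "nat list \<Rightarrow> mpoly set" where
  "Vstar lam = {f \<in> polys_deg (length lam) (sum_list lam).
      \<forall>nu \<in> comps (length lam). sum_list nu \<le> sum_list lam \<and> nu \<notin> rearr lam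
          \<longrightarrow> eval f (tilde nu) = 0}"

definition is_basis_family :: "(nat list \<Rightarrow> mpoly) \<Rightarrow> nat list set \<Rightarrow> mpoly set \<Rightarrow> bool" where
  "is_basis_family b I V \<longleftrightarrow>
     (\<forall>i \<in> I. b i \<in> V) \<and>
     (\<forall>S c. finite S \<and> S \<subseteq> I \<and> (\<Sum>i\<in>S. scal (c i) (b i)) = 0 \<longrightarrow> (\<forall>i\<in>S. c i = 0)) \<and>
     (\<forall>g \<in> V. \<exists>S c. finite S \<and> S \<subseteq> I \<and> g = (\<Sum>i\<in>S. scal (c i) (b i)))"

end

theory Submission
  imports Defs "Jordan_Normal_Form.Determinant" "HOL-Library.Product_Lexorder"
begin

text \<open>A polynomial of degree at most \<open>d\<close> is determined by its values at the points \<open>\<nu>\<^sup>~\<close>,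
  \<open>|\<nu>| \<le> d\<close>: clearing denominators and specialising \<open>t = 1\<close> turns these points into the grid
  \<open>(q\<^sup>\<nu>\<^sup>1, \<dots>, q\<^sup>\<nu>\<^sup>n)\<close>, on which the Newton polynomials are triangular. By linear algebra this
  gives \<open>E\<^sup>*\<^sub>\<lambda>\<close>. Each \<open>T\<^sub>i\<close> preserves \<open>V\<^sup>*\<^sub>\<lambda>\<close>, and along a reduced word for \<open>\<sigma>\<^sub>\<mu>\<close> it moves the
  only non-vanishing point, so that \<open>f\<^sup>*\<^sub>\<mu>(\<nu>\<^sup>~) = 0\<close> whenever \<open>\<nu> \<noteq> \<mu>\<close> and either \<open>|\<nu>| < |\<mu>|\<close>,
  or \<open>|\<nu>| = |\<mu>|\<close> and \<open>\<nu>\<close> has at least as many inversions as \<open>\<mu>\<close>, while \<open>f\<^sup>*\<^sub>\<mu>(\<mu>\<^sup>~) \<noteq> 0\<close>.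
  Hence the matrix \<open>(f\<^sup>*\<^sub>\<mu>(\<nu>\<^sup>~))\<close> is triangular, which gives linear independence, and together
  with unisolvence it gives spanning.\<close>

section \<open>Triangular systems\<close>

text \<open>\<open>E x y\<close> is the value of the \<open>x\<close>-th function at the node \<open>y\<close>.\<close>
definition triangular :: "('a \<Rightarrow> 'w::linorder) \<Rightarrow> 'a set \<Rightarrow> ('a \<Rightarrow> 'a \<Rightarrow> 'b::field) \<Rightarrow> bool" where
  "triangular w D E \<longleftrightarrow>
     (\<forall>x\<in>D. E x x \<noteq> 0) \<and> (\<forall>x\<in>D. \<forall>y\<in>D. y \<noteq> x \<and> w y \<le> w x \<longrightarrow> E x y = 0)"

lemma triangular_subset: "triangular w D E \<Longrightarrow> D' \<subseteq> D \<Longrightarrow> triangular w D' E"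
  unfolding triangular_def by blast

lemma triangular_insert_maximal:
  assumes "triangular w (insert x D) E" "finite D" "x \<notin> D" "\<And>y. y \<in> D \<Longrightarrow> w y \<le> w x" "y \<in> D"
  shows "(\<Sum>z\<in>insert x D. c z * E z y) = (\<Sum>z\<in>D. c z * E z y)"
proof -
  have "E x y = 0" using assms unfolding triangular_def by (metis insertCI)
  then show ?thesis using assms(2,3) by simp
qed

lemma triangular_solve:
  assumes "finite D" "triangular w D E"
  shows "\<exists>c. \<forall>y\<in>D. \<phi> y = (\<Sum>x\<in>D. c x * E x y)"
  using assms
proof (induction D rule: finite_ranking_induct[where f = w])
  case (insert x D)
  show ?case
  proof (cases "x \<in> D")
    case True
    then show ?thesis using insert by (simp add: insert_absorb)
  next
    case x: False
    obtain c where c: "\<forall>y\<in>D. \<phi> y = (\<Sum>x\<in>D. c x * E x y)"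
      using insert triangular_subset[OF insert.prems] by blast
    have Exx: "E x x \<noteq> 0" using insert.prems by (simp add: triangular_def)
    define c' where "c' = c(x := (\<phi> x - (\<Sum>z\<in>D. c z * E z x)) / E x x)"
    have c'D: "(\<Sum>z\<in>D. c' z * E z y) = (\<Sum>z\<in>D. c z * E z y)" for y
      using x by (intro sum.cong) (auto simp: c'_def)
    have "\<phi> y = (\<Sum>z\<in>insert x D. c' z * E z y)" if y: "y \<in> insert x D" for y
    proof (cases "y = x")
      case True
      then show ?thesis using x Exx insert(1) by (simp add: c'D) (simp add: c'_def)
    next
      case False
      then show ?thesis
        using y c c'D triangular_insert_maximal[OF insert.prems insert(1) x insert(2)] by auto
    qed
    then show ?thesis by blast
  qed
qed simp

lemma triangular_independent:
  assumes "finite D" "triangular w D E" "\<forall>y\<in>D. (\<Sum>x\<in>D. c x * E x y) = 0"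
  shows "\<forall>x\<in>D. c x = 0"
  using assms
proof (induction D rule: finite_ranking_induct[where f = w])
  case (insert x D)
  show ?case
  proof (cases "x \<in> D")
    case True
    then show ?thesis using insert by (simp add: insert_absorb)
  next
    case x: False
    have "\<forall>y\<in>D. (\<Sum>z\<in>D. c z * E z y) = 0"
      using insert.prems(2) triangular_insert_maximal[OF insert.prems(1) insert(1) x insert(2)] by auto
    then have cD: "\<forall>z\<in>D. c z = 0"
      using insert triangular_subset[OF insert.prems(1)] by blast
    have "(\<Sum>z\<in>insert x D. c z * E z x) = c x * E x x"
      using x cD insert(1) by simp
    then have "c x * E x x = 0"
      using insert.prems(2) by simp
    then show ?thesis using cD insert.prems(1) by (simp add: triangular_def)
  qed
qed simp

definition eval_monomial :: "(nat \<Rightarrow>\<^sub>0 nat) \<Rightarrow> K list \<Rightarrow> K" where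
  "eval_monomial m v = (\<Prod>i\<in>Poly_Mapping.keys m. (v ! i) ^ Poly_Mapping.lookup m i)"

lemma eval_monomial_superset:
  assumes "finite S" "Poly_Mapping.keys m \<subseteq> S"
  shows "eval_monomial m v = (\<Prod>i\<in>S. (v ! i) ^ Poly_Mapping.lookup m i)"
  unfolding eval_monomial_def using assms
  by (intro prod.mono_neutral_left) (auto simp: in_keys_iff)

lemma eval_monomial_add: "eval_monomial (k + l) v = eval_monomial k v * eval_monomial l v"
proof -
  let ?S = "Poly_Mapping.keys k \<union> Poly_Mapping.keys l"
  have "eval_monomial (k + l) v = (\<Prod>i\<in>?S. (v ! i) ^ Poly_Mapping.lookup (k + l) i)"
    by (rule eval_monomial_superset) (auto simp: keys_add)
  also have "\<dots> = (\<Prod>i\<in>?S. (v ! i) ^ Poly_Mapping.lookup k i) * (\<Prod>i\<in>?S. (v ! i) ^ Poly_Mapping.lookup l i)"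
    by (simp add: lookup_add power_add prod.distrib)
  also have "\<dots> = eval_monomial k v * eval_monomial l v"
    by (subst (1 2) eval_monomial_superset[of ?S]) auto
  finally show ?thesis .
qed

lemma eval_eq_sum: "eval f v = (\<Sum>m\<in>Poly_Mapping.keys f. Poly_Mapping.lookup f m * eval_monomial m v)"
  by (simp add: eval_def eval_monomial_def)

lemma eval_eq_sum_superset:
  assumes "finite S" "Poly_Mapping.keys f \<subseteq> S"
  shows "eval f v = (\<Sum>m\<in>S. Poly_Mapping.lookup f m * eval_monomial m v)"
  unfolding eval_eq_sum using assms
  by (intro sum.mono_neutral_left) (auto simp: in_keys_iff)

lemma eval_add: "eval (f + g) v = eval f v + eval g v"
proof -
  let ?S = "Poly_Mapping.keys f \<union> Poly_Mapping.keys g"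
  have "eval (f + g) v = (\<Sum>m\<in>?S. Poly_Mapping.lookup (f + g) m * eval_monomial m v)"
    by (rule eval_eq_sum_superset) (auto simp: keys_add)
  also have "\<dots> = (\<Sum>m\<in>?S. Poly_Mapping.lookup f m * eval_monomial m v)
                   + (\<Sum>m\<in>?S. Poly_Mapping.lookup g m * eval_monomial m v)"
    by (simp add: lookup_add distrib_right sum.distrib)
  also have "\<dots> = eval f v + eval g v"
    by (subst (1 2) eval_eq_sum_superset[of ?S]) auto
  finally show ?thesis .
qed

lemma eval_zero [simp]: "eval 0 v = 0"
  by (simp add: eval_def)

lemma eval_diff: "eval (f - g) v = eval f v - eval g v"
  by (metis add_diff_cancel_right' diff_add_cancel eval_add)

lemma eval_sum: "eval (\<Sum>x\<in>A. F x) v = (\<Sum>x\<in>A. eval (F x) v)"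
  by (induction A rule: infinite_finite_induct) (auto simp: eval_add)

lemma eval_single: "eval (Poly_Mapping.single m c) v = c * eval_monomial m v"
  by (simp add: eval_eq_sum)

lemma sum_single_lookup:
  "(\<Sum>m\<in>Poly_Mapping.keys f. Poly_Mapping.single m (Poly_Mapping.lookup f m)) = (f :: 'a \<Rightarrow>\<^sub>0 'b::comm_monoid_add)"
proof (rule poly_mapping_eqI)
  fix k
  show "Poly_Mapping.lookup (\<Sum>m\<in>Poly_Mapping.keys f. Poly_Mapping.single m (Poly_Mapping.lookup f m)) k
      = Poly_Mapping.lookup f k"
    by (cases "k \<in> Poly_Mapping.keys f") (auto simp: lookup_sum lookup_single when_def in_keys_iff)
qed

lemma eval_mult: "eval (f * g) v = eval f v * eval g v"
proof -
  have "f * g = (\<Sum>m\<in>Poly_Mapping.keys f. \<Sum>l\<in>Poly_Mapping.keys g.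
        Poly_Mapping.single (m + l) (Poly_Mapping.lookup f m * Poly_Mapping.lookup g l))"
    by (subst (1) sum_single_lookup[of f, symmetric], subst (1) sum_single_lookup[of g, symmetric])
       (simp add: sum_product mult_single)
  then have "eval (f * g) v = (\<Sum>m\<in>Poly_Mapping.keys f. \<Sum>l\<in>Poly_Mapping.keys g.
        Poly_Mapping.lookup f m * Poly_Mapping.lookup g l * (eval_monomial m v * eval_monomial l v))"
    by (simp add: eval_sum eval_single eval_monomial_add)
  also have "\<dots> = eval f v * eval g v"
    by (simp add: eval_eq_sum sum_product mult_ac)
  finally show ?thesis .
qed

lemma eval_var [simp]: "eval (var i) v = v ! i"
  by (simp add: var_def eval_single eval_monomial_def)

lemma eval_mconst [simp]: "eval (mconst c) v = c"
  by (simp add: mconst_def eval_single eval_monomial_def)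

lemma eval_scal [simp]: "eval (scal c f) v = c * eval f v"
  by (simp add: scal_def eval_mult)

lemma eval_one [simp]: "eval 1 v = 1"
  by (simp flip: single_one add: eval_single eval_monomial_def)

lemma eval_prod: "eval (\<Prod>x\<in>A. F x) v = (\<Prod>x\<in>A. eval (F x) v)"
  by (induction A rule: infinite_finite_induct) (auto simp: eval_mult)

lemma scal_0_left [simp]: "scal 0 f = 0"
  by (simp add: scal_def mconst_def)

lemma lookup_scal: "Poly_Mapping.lookup (scal c f) m = c * Poly_Mapping.lookup f m"
  by (simp add: scal_def mconst_def mult_map_scale_conv_mult[symmetric] Poly_Mapping.map.rep_eq when_def)

lemma mdeg_superset:
  assumes "finite S" "Poly_Mapping.keys m \<subseteq> S"
  shows "mdeg m = (\<Sum>i\<in>S. Poly_Mapping.lookup m i)"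
  unfolding mdeg_def using assms
  by (intro sum.mono_neutral_left) (auto simp: in_keys_iff)

lemma mdeg_add: "mdeg (k + l) = mdeg k + mdeg l"
proof -
  let ?S = "Poly_Mapping.keys k \<union> Poly_Mapping.keys l"
  have "mdeg (k + l) = (\<Sum>i\<in>?S. Poly_Mapping.lookup (k + l) i)"
    by (rule mdeg_superset) (auto simp: keys_add)
  also have "\<dots> = (\<Sum>i\<in>?S. Poly_Mapping.lookup k i) + (\<Sum>i\<in>?S. Poly_Mapping.lookup l i)"
    by (simp add: lookup_add sum.distrib)
  also have "\<dots> = mdeg k + mdeg l"
    by (subst (1 2) mdeg_superset[of ?S]) auto
  finally show ?thesis .
qed

lemma mdeg_zero [simp]: "mdeg 0 = 0"
  by (simp add: mdeg_def)

lemma mdeg_sum: "mdeg (\<Sum>x\<in>A. M x) = (\<Sum>x\<in>A. mdeg (M x))"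
  by (induction A rule: infinite_finite_induct) (simp_all add: mdeg_add)

lemma mdeg_single [simp]: "mdeg (Poly_Mapping.single i a) = a"
  by (simp add: mdeg_def)

lemma keys_add_nat: "Poly_Mapping.keys (k + l :: 'a \<Rightarrow>\<^sub>0 nat) = Poly_Mapping.keys k \<union> Poly_Mapping.keys l"
  by (auto simp: in_keys_iff lookup_add)

lemma polys_deg_iff:
  "f \<in> polys_deg n d \<longleftrightarrow> (\<forall>m\<in>Poly_Mapping.keys f. Poly_Mapping.keys m \<subseteq> {..<n} \<and> mdeg m \<le> d)"
  by (auto simp: polys_deg_def polys_def)

lemma polys_deg_subset_polys: "polys_deg n d \<subseteq> polys n"
  by (auto simp: polys_deg_def)

lemma polys_deg_keys_subset:
  "f \<in> polys_deg n d \<Longrightarrow> Poly_Mapping.keys g \<subseteq> Poly_Mapping.keys f \<Longrightarrow> g \<in> polys_deg n d"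
  unfolding polys_deg_iff by blast

lemma polys_deg_mono: "f \<in> polys_deg n d \<Longrightarrow> d \<le> d' \<Longrightarrow> f \<in> polys_deg n d'"
  unfolding polys_deg_iff by force

lemma polys_deg_zero [simp]: "0 \<in> polys_deg n d"
  by (simp add: polys_deg_iff)

lemma polys_deg_add: "f \<in> polys_deg n d \<Longrightarrow> g \<in> polys_deg n d \<Longrightarrow> f + g \<in> polys_deg n d"
  unfolding polys_deg_iff using keys_add[of f g] by blast

lemma polys_deg_uminus: "f \<in> polys_deg n d \<Longrightarrow> - f \<in> polys_deg n d"
  unfolding polys_deg_iff by (simp add: in_keys_iff)

lemma polys_deg_diff: "f \<in> polys_deg n d \<Longrightarrow> g \<in> polys_deg n d \<Longrightarrow> f - g \<in> polys_deg n d"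
  using polys_deg_add[of f n d "- g"] polys_deg_uminus[of g n d] by simp

lemma polys_deg_sum: "(\<And>x. x \<in> A \<Longrightarrow> F x \<in> polys_deg n d) \<Longrightarrow> (\<Sum>x\<in>A. F x) \<in> polys_deg n d"
  by (induction A rule: infinite_finite_induct) (auto intro: polys_deg_add)

lemma polys_deg_mult: "f \<in> polys_deg n a \<Longrightarrow> g \<in> polys_deg n b \<Longrightarrow> f * g \<in> polys_deg n (a + b)"
proof (unfold polys_deg_iff, intro ballI)
  fix m assume f: "\<forall>m\<in>Poly_Mapping.keys f. Poly_Mapping.keys m \<subseteq> {..<n} \<and> mdeg m \<le> a"
    and g: "\<forall>m\<in>Poly_Mapping.keys g. Poly_Mapping.keys m \<subseteq> {..<n} \<and> mdeg m \<le> b"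
    and "m \<in> Poly_Mapping.keys (f * g)"
  then obtain k l where "m = k + l" "k \<in> Poly_Mapping.keys f" "l \<in> Poly_Mapping.keys g"
    using keys_mult[of f g] by blast
  with f g show "Poly_Mapping.keys m \<subseteq> {..<n} \<and> mdeg m \<le> a + b"
    by (auto simp: keys_add_nat mdeg_add add_mono)
qed

lemma polys_deg_single:
  "Poly_Mapping.keys m \<subseteq> {..<n} \<Longrightarrow> mdeg m \<le> d \<Longrightarrow> Poly_Mapping.single m c \<in> polys_deg n d"
  unfolding polys_deg_iff by simp

lemma polys_deg_var: "i < n \<Longrightarrow> var i \<in> polys_deg n 1"
  unfolding var_def by (rule polys_deg_single) auto

lemma polys_deg_mconst: "mconst c \<in> polys_deg n d"
  unfolding mconst_def by (rule polys_deg_single) auto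

lemma polys_deg_one: "1 \<in> polys_deg n d"
  by (simp add: polys_deg_iff)

lemma polys_deg_scal: "f \<in> polys_deg n d \<Longrightarrow> scal c f \<in> polys_deg n d"
  unfolding scal_def using polys_deg_mult[OF polys_deg_mconst, of f n d c 0] by simp

lemma polys_deg_power: "f \<in> polys_deg n a \<Longrightarrow> f ^ k \<in> polys_deg n (a * k)"
  by (induction k) (auto simp: polys_deg_mult polys_deg_one)

lemma polys_deg_prod:
  "finite A \<Longrightarrow> (\<And>x. x \<in> A \<Longrightarrow> F x \<in> polys_deg n (D x)) \<Longrightarrow> (\<Prod>x\<in>A. F x) \<in> polys_deg n (\<Sum>x\<in>A. D x)"
  by (induction A rule: finite_induct) (auto intro: polys_deg_mult polys_deg_one)

section \<open>Adjacent transpositions and divided differences\<close>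

lemma swp_swp [simp]: "swp i (swp i j) = j"
  by (simp add: swp_def)

lemma inj_swp: "inj (swp i)"
  by (metis injI swp_swp)

lemma bij_swp: "bij (swp i)"
  by (metis bij_def inj_swp surjI swp_swp)

lemma inv_swp: "Hilbert_Choice.inv (swp i) = swp i"
  by (metis inj_swp inv_f_f swp_swp ext)

lemma swp_less_iff: "Suc i < n \<Longrightarrow> swp i j < n \<longleftrightarrow> j < n"
  by (auto simp: swp_def)

lemma swp_image_iff: "x \<in> swp i ` A \<longleftrightarrow> swp i x \<in> A"
  by (metis imageI image_iff swp_swp)

definition swap_list :: "nat \<Rightarrow> 'a list \<Rightarrow> 'a list" where
  "swap_list i xs = map (\<lambda>j. xs ! swp i j) [0..<length xs]"

lemma length_swap_list [simp]: "length (swap_list i xs) = length xs"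
  by (simp add: swap_list_def)

lemma nth_swap_list: "j < length xs \<Longrightarrow> swap_list i xs ! j = xs ! swp i j"
  by (simp add: swap_list_def)

lemma swap_list_swap_list: "Suc i < length xs \<Longrightarrow> swap_list i (swap_list i xs) = xs"
  by (rule nth_equalityI) (auto simp: nth_swap_list swp_less_iff)

abbreviation swap_monomial :: "nat \<Rightarrow> (nat \<Rightarrow>\<^sub>0 nat) \<Rightarrow> (nat \<Rightarrow>\<^sub>0 nat)" where
  "swap_monomial i m \<equiv> Poly_Mapping.map_key (swp i) m"

lemma lookup_swap_monomial: "Poly_Mapping.lookup (swap_monomial i m) k = Poly_Mapping.lookup m (swp i k)"
  using inj_swp[of i] by (simp add: map_key.rep_eq)

lemma swap_monomial_swap_monomial [simp]: "swap_monomial i (swap_monomial i m) = m"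
  by (rule poly_mapping_eqI) (simp add: lookup_swap_monomial)

lemma inj_swap_monomial: "inj (swap_monomial i)"
  by (metis injI swap_monomial_swap_monomial)

lemma keys_swap_monomial: "Poly_Mapping.keys (swap_monomial i m) = swp i ` Poly_Mapping.keys m"
  by (auto simp: in_keys_iff lookup_swap_monomial swp_image_iff)

lemma eval_monomial_swap_monomial:
  assumes "Poly_Mapping.keys m \<subseteq> {..<length v}" "Suc i < length v"
  shows "eval_monomial (swap_monomial i m) v = eval_monomial m (swap_list i v)"
proof -
  have "eval_monomial (swap_monomial i m) v =
      (\<Prod>k\<in>swp i ` Poly_Mapping.keys m. (v ! k) ^ Poly_Mapping.lookup m (swp i k))"
    by (simp add: eval_monomial_def keys_swap_monomial lookup_swap_monomial)
  also have "\<dots> = (\<Prod>k\<in>Poly_Mapping.keys m. (v ! swp i k) ^ Poly_Mapping.lookup m k)"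
    by (subst prod.reindex) (auto simp: inj_on_def dest: inj_onD[OF inj_swp])
  also have "\<dots> = eval_monomial m (swap_list i v)"
    unfolding eval_monomial_def using assms by (intro prod.cong) (auto simp: nth_swap_list)
  finally show ?thesis .
qed

lemma lookup_swap_poly: "Poly_Mapping.lookup (swap_poly i f) m = Poly_Mapping.lookup f (swap_monomial i m)"
  unfolding swap_poly_def using inj_swap_monomial[of i] by (simp add: map_key.rep_eq)

lemma swap_monomial_image_iff: "x \<in> swap_monomial i ` A \<longleftrightarrow> swap_monomial i x \<in> A"
  by (metis imageI image_iff swap_monomial_swap_monomial)

lemma keys_swap_poly: "Poly_Mapping.keys (swap_poly i f) = swap_monomial i ` Poly_Mapping.keys f"
  by (auto simp: in_keys_iff lookup_swap_poly swap_monomial_image_iff)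

lemma eval_swap_poly:
  assumes "f \<in> polys n" "length v = n" "Suc i < n"
  shows "eval (swap_poly i f) v = eval f (swap_list i v)"
proof -
  have "eval (swap_poly i f) v = (\<Sum>m\<in>swap_monomial i ` Poly_Mapping.keys f.
      Poly_Mapping.lookup f (swap_monomial i m) * eval_monomial m v)"
    by (simp add: eval_eq_sum keys_swap_poly lookup_swap_poly)
  also have "\<dots> = (\<Sum>m\<in>Poly_Mapping.keys f. Poly_Mapping.lookup f m * eval_monomial (swap_monomial i m) v)"
    by (subst sum.reindex) (auto simp: inj_on_def dest: inj_onD[OF inj_swap_monomial])
  also have "\<dots> = eval f (swap_list i v)"
    unfolding eval_eq_sum using assms
    by (intro sum.cong) (auto simp: polys_def eval_monomial_swap_monomial)
  finally show ?thesis .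
qed

lemma swap_poly_single: "swap_poly i (Poly_Mapping.single m c) = Poly_Mapping.single (swap_monomial i m) c"
  by (rule poly_mapping_eqI) (auto simp: lookup_swap_poly lookup_single when_def)

lemma swap_poly_add: "swap_poly i (f + g) = swap_poly i f + swap_poly i g"
  by (rule poly_mapping_eqI) (simp add: lookup_swap_poly lookup_add)

lemma swap_poly_zero [simp]: "swap_poly i 0 = 0"
  by (rule poly_mapping_eqI) (simp add: lookup_swap_poly)

lemma swap_poly_sum: "swap_poly i (\<Sum>x\<in>A. F x) = (\<Sum>x\<in>A. swap_poly i (F x))"
  by (induction A rule: infinite_finite_induct) (auto simp: swap_poly_add)

lemma var_power: "var i ^ a = Poly_Mapping.single (Poly_Mapping.single i a) 1"
  by (induction a) (simp_all add: var_def mult_single flip: single_add)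

definition hsum :: "nat \<Rightarrow> nat \<Rightarrow> mpoly" where
  "hsum i k = (\<Sum>j<k. var (Suc i) ^ (k - Suc j) * var i ^ j)"

lemma var_diff_mult_hsum: "(var i - var (Suc i)) * hsum i k = var i ^ k - var (Suc i) ^ k"
  by (simp add: hsum_def power_diff_sumr2)

lemma polys_deg_power_mult_hsum:
  assumes "Suc i < n"
  shows "var (Suc i) ^ b * hsum i a \<in> polys_deg n (a + b - 1)"
proof (cases a)
  case (Suc a')
  have "var (Suc i) ^ b * (var (Suc i) ^ (a - Suc j) * var i ^ j)
      \<in> polys_deg n (1 * b + (1 * (a - Suc j) + 1 * j))" for j
    using assms by (intro polys_deg_mult polys_deg_power polys_deg_var) auto
  then have "var (Suc i) ^ b * (var (Suc i) ^ (a - Suc j) * var i ^ j) \<in> polys_deg n (a + b - 1)" if "j < a" for j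
    by (rule polys_deg_mono) (use that in auto)
  then show ?thesis
    unfolding hsum_def sum_distrib_left by (intro polys_deg_sum) auto
qed (simp add: hsum_def)

text \<open>Writing \<open>x\<^sup>m = x\<^sup>r x\<^sub>i\<^sup>a x\<^sub>i\<^sub>+\<^sub>1\<^sup>b\<close>, we have \<open>x\<^sup>m - s\<^sub>i x\<^sup>m = x\<^sup>r (x\<^sub>i\<^sub>+\<^sub>1\<^sup>b (x\<^sub>i\<^sup>a - x\<^sub>i\<^sub>+\<^sub>1\<^sup>a) - x\<^sub>i\<^sub>+\<^sub>1\<^sup>a (x\<^sub>i\<^sup>b - x\<^sub>i\<^sub>+\<^sub>1\<^sup>b))\<close>.\<close>
definition ddiff_monomial :: "nat \<Rightarrow> (nat \<Rightarrow>\<^sub>0 nat) \<Rightarrow> K \<Rightarrow> mpoly" where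
  "ddiff_monomial i m c =
     (let a = Poly_Mapping.lookup m i; b = Poly_Mapping.lookup m (Suc i)
      in Poly_Mapping.single (m - Poly_Mapping.single i a - Poly_Mapping.single (Suc i) b) c
           * (var (Suc i) ^ b * hsum i a - var (Suc i) ^ a * hsum i b))"

lemma monomial_split:
  fixes m :: "nat \<Rightarrow>\<^sub>0 nat" and i :: nat
  defines "a \<equiv> Poly_Mapping.lookup m i" and "b \<equiv> Poly_Mapping.lookup m (Suc i)"
  defines "r \<equiv> m - Poly_Mapping.single i a - Poly_Mapping.single (Suc i) b"
  shows "m = r + Poly_Mapping.single i a + Poly_Mapping.single (Suc i) b"
    and "swap_monomial i m = r + Poly_Mapping.single i b + Poly_Mapping.single (Suc i) a"
  by (rule poly_mapping_eqI; auto simp: r_def a_def b_def lookup_add lookup_minus lookup_single when_def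
      lookup_swap_monomial swp_def)+

lemma var_diff_mult_ddiff_monomial:
  "(var i - var (Suc i)) * ddiff_monomial i m c
     = Poly_Mapping.single m c - Poly_Mapping.single (swap_monomial i m) c"
proof -
  define a where "a = Poly_Mapping.lookup m i"
  define b where "b = Poly_Mapping.lookup m (Suc i)"
  define r where "r = m - Poly_Mapping.single i a - Poly_Mapping.single (Suc i) b"
  let ?X = "var i" and ?Y = "var (Suc i)"
  have m: "m = r + Poly_Mapping.single i a + Poly_Mapping.single (Suc i) b"
    and sm: "swap_monomial i m = r + Poly_Mapping.single i b + Poly_Mapping.single (Suc i) a"
    unfolding a_def b_def r_def by (rule monomial_split)+
  have split: "Poly_Mapping.single (r + Poly_Mapping.single i x + Poly_Mapping.single (Suc i) y) c =
      Poly_Mapping.single r c * (?X ^ x * ?Y ^ y)" for x y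
    by (simp add: mult_single var_power mult.assoc add.assoc)
  have "ddiff_monomial i m c = Poly_Mapping.single r c * (?Y ^ b * hsum i a - ?Y ^ a * hsum i b)"
    by (simp add: ddiff_monomial_def Let_def a_def b_def r_def)
  then have "(?X - ?Y) * ddiff_monomial i m c
      = Poly_Mapping.single r c * (?Y ^ b * ((?X - ?Y) * hsum i a) - ?Y ^ a * ((?X - ?Y) * hsum i b))"
    by (simp only: right_diff_distrib mult.left_commute)
  also have "\<dots> = Poly_Mapping.single r c * (?X ^ a * ?Y ^ b) - Poly_Mapping.single r c * (?X ^ b * ?Y ^ a)"
    unfolding var_diff_mult_hsum by (simp only: right_diff_distrib mult.commute) simp
  also have "\<dots> = Poly_Mapping.single m c - Poly_Mapping.single (swap_monomial i m) c"
    by (simp only: split[symmetric] m[symmetric] sm[symmetric])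
  finally show ?thesis .
qed

lemma lookup_le_mdeg: "Poly_Mapping.lookup m i \<le> mdeg m"
  by (cases "i \<in> Poly_Mapping.keys m") (auto simp: mdeg_def in_keys_iff intro: member_le_sum)

lemma polys_deg_ddiff_monomial:
  assumes "Suc i < n" "Poly_Mapping.keys m \<subseteq> {..<n}"
  shows "ddiff_monomial i m c \<in> polys_deg n (mdeg m - 1)"
    and "mdeg m = 0 \<Longrightarrow> ddiff_monomial i m c = 0"
proof -
  define a where "a = Poly_Mapping.lookup m i"
  define b where "b = Poly_Mapping.lookup m (Suc i)"
  define r where "r = m - Poly_Mapping.single i a - Poly_Mapping.single (Suc i) b"
  have m: "m = r + Poly_Mapping.single i a + Poly_Mapping.single (Suc i) b"
    unfolding a_def b_def r_def by (rule monomial_split)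
  have r: "Poly_Mapping.keys r \<subseteq> {..<n}" using assms(2) by (subst (asm) m) (auto simp: keys_add_nat)
  have zero: "ddiff_monomial i m c = 0" if "a + b = 0"
    using that by (simp add: ddiff_monomial_def Let_def a_def[symmetric] b_def[symmetric] hsum_def)
  have "var (Suc i) ^ b * hsum i a - var (Suc i) ^ a * hsum i b \<in> polys_deg n (a + b - 1)"
    using polys_deg_power_mult_hsum[OF assms(1), of b a] polys_deg_power_mult_hsum[OF assms(1), of a b]
    by (intro polys_deg_diff) (simp_all add: add.commute)
  then have "ddiff_monomial i m c \<in> polys_deg n (mdeg r + (a + b - 1))"
    by (simp add: ddiff_monomial_def Let_def a_def[symmetric] b_def[symmetric] r_def[symmetric]
        polys_deg_mult polys_deg_single r)
  moreover have "mdeg m = mdeg r + a + b"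
    by (subst m) (simp add: mdeg_add)
  ultimately show "ddiff_monomial i m c \<in> polys_deg n (mdeg m - 1)"
    using zero by (cases "a + b = 0") (auto simp: add.assoc)
  show "mdeg m = 0 \<Longrightarrow> ddiff_monomial i m c = 0"
    using zero lookup_le_mdeg[of m i] lookup_le_mdeg[of m "Suc i"] by (simp add: a_def b_def)
qed

lemma var_diff_nonzero: "var i - var (Suc i) \<noteq> 0"
proof
  assume "var i - var (Suc i) = 0"
  then have "Poly_Mapping.lookup (var i - var (Suc i)) (Poly_Mapping.single i 1) = 0" by simp
  then show False
    by (simp add: var_def lookup_minus lookup_single when_def)
       (metis lookup_single_eq lookup_single_not_eq n_not_Suc_n one_neq_zero)
qed

lemma var_diff_mult_sum_ddiff_monomial:
  "(var i - var (Suc i)) * (\<Sum>m\<in>Poly_Mapping.keys f. ddiff_monomial i m (Poly_Mapping.lookup f m))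
     = f - swap_poly i f"
  by (simp add: sum_distrib_left var_diff_mult_ddiff_monomial sum_subtractf
      flip: swap_poly_single swap_poly_sum, simp add: sum_single_lookup)

lemma ddiff_eq_sum: "ddiff i f = (\<Sum>m\<in>Poly_Mapping.keys f. ddiff_monomial i m (Poly_Mapping.lookup f m))"
  unfolding ddiff_def
proof (rule the_equality)
  fix g assume "(var i - var (Suc i)) * g = f - swap_poly i f"
  then show "g = (\<Sum>m\<in>Poly_Mapping.keys f. ddiff_monomial i m (Poly_Mapping.lookup f m))"
    using var_diff_nonzero[of i] by (simp flip: var_diff_mult_sum_ddiff_monomial)
qed (rule var_diff_mult_sum_ddiff_monomial)

lemma var_diff_mult_ddiff: "(var i - var (Suc i)) * ddiff i f = f - swap_poly i f"
  by (simp add: ddiff_eq_sum var_diff_mult_sum_ddiff_monomial)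

lemma polys_deg_ddiff:
  assumes f: "f \<in> polys_deg n d" and i: "Suc i < n"
  shows "ddiff i f \<in> polys_deg n (d - 1)" and "d = 0 \<Longrightarrow> ddiff i f = 0"
proof -
  have m: "Poly_Mapping.keys m \<subseteq> {..<n}" "mdeg m \<le> d" if "m \<in> Poly_Mapping.keys f" for m
    using f that by (auto simp: polys_deg_iff)
  show "ddiff i f \<in> polys_deg n (d - 1)"
    unfolding ddiff_eq_sum
  proof (rule polys_deg_sum)
    fix m assume "m \<in> Poly_Mapping.keys f"
    with m show "ddiff_monomial i m (Poly_Mapping.lookup f m) \<in> polys_deg n (d - 1)"
      by (meson diff_le_mono polys_deg_ddiff_monomial(1)[OF i] polys_deg_mono)
  qed
  show "ddiff i f = 0" if "d = 0"
    unfolding ddiff_eq_sum using polys_deg_ddiff_monomial(2)[OF i m(1)] m(2) that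
    by (intro sum.neutral) auto
qed

lemma eval_ddiff:
  assumes "f \<in> polys n" "length v = n" "Suc i < n"
  shows "(v ! i - v ! Suc i) * eval (ddiff i f) v = eval f v - eval f (swap_list i v)"
  using arg_cong[OF var_diff_mult_ddiff, of "\<lambda>g. eval g v" i f] assms
  by (simp add: eval_mult eval_diff eval_swap_poly)

lemma eval_Top: "eval (Top i f) v = tt * eval f v - (tt * v ! i - v ! Suc i) * eval (ddiff i f) v"
  by (simp add: Top_def eval_diff eval_mult)

lemma polys_deg_Top:
  assumes "f \<in> polys_deg n d" "Suc i < n"
  shows "Top i f \<in> polys_deg n d"
proof (cases d)
  case 0
  then show ?thesis using polys_deg_ddiff(2)[OF assms] assms by (simp add: Top_def polys_deg_scal)
next
  case (Suc d')
  have "(scal tt (var i) - var (Suc i)) * ddiff i f \<in> polys_deg n (1 + d')"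
    using polys_deg_ddiff(1)[OF assms] assms Suc
    by (intro polys_deg_mult polys_deg_diff polys_deg_scal polys_deg_var) auto
  then show ?thesis using assms Suc
    by (simp add: Top_def polys_deg_scal polys_deg_diff)
qed

lemma polys_deg_Tword: "f \<in> polys_deg n d \<Longrightarrow> w \<in> words n \<Longrightarrow> Tword w f \<in> polys_deg n d"
  by (induction w) (auto simp: Tword_def words_def intro: polys_deg_Top)

definition to_fract :: "rat poly poly \<Rightarrow> K" where
  "to_fract p = Fract p 1"

lemma to_fract_add: "to_fract (a + b) = to_fract a + to_fract b"
  by (simp add: to_fract_def)

lemma to_fract_mult: "to_fract (a * b) = to_fract a * to_fract b"
  by (simp add: to_fract_def)

lemma to_fract_0 [simp]: "to_fract 0 = 0"
  by (simp add: to_fract_def Zero_fract_def)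

lemma to_fract_1 [simp]: "to_fract 1 = 1"
  by (simp add: to_fract_def One_fract_def)

lemma to_fract_eq_iff: "to_fract a = to_fract b \<longleftrightarrow> a = b"
  by (simp add: to_fract_def eq_fract)

lemma to_fract_eq_0_iff: "to_fract a = 0 \<longleftrightarrow> a = 0"
  using to_fract_eq_iff[of a 0] by simp

lemma to_fract_power: "to_fract (a ^ k) = to_fract a ^ k"
  by (induction k) (auto simp: to_fract_mult)

lemma to_fract_sum: "to_fract (\<Sum>x\<in>A. F x) = (\<Sum>x\<in>A. to_fract (F x))"
  by (induction A rule: infinite_finite_induct) (auto simp: to_fract_add)

lemma qq_eq: "qq = to_fract [:[:0, 1:]:]"
  by (simp add: qq_def to_fract_def)

lemma tt_eq: "tt = to_fract [:0, 1:]"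
  by (simp add: tt_def to_fract_def)

lemma tt_nonzero [simp]: "tt \<noteq> 0"
  by (simp add: tt_eq to_fract_eq_0_iff)

lemma qq_power_mult_tt_power: "qq ^ a * tt ^ k = to_fract (monom (monom 1 a) k)"
proof -
  have "([:[:0, 1:]:] :: rat poly poly) ^ a = [:monom 1 a:]"
    by (simp add: poly_const_pow monom_power flip: monom_altdef[of 1 1, simplified])
  moreover have "([:0, 1:] :: rat poly poly) ^ k = monom 1 k"
    by (simp add: monom_altdef)
  ultimately show ?thesis
    by (simp add: qq_eq tt_eq smult_monom flip: to_fract_power to_fract_mult)
qed

lemma qq_power_mult_tt_power_inj:
  assumes "qq ^ a * tt ^ k = qq ^ b * tt ^ l"
  shows "a = b \<and> k = l"
proof -
  have e: "monom (monom (1::rat) a) k = monom (monom 1 b) l"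
    using assms by (simp add: qq_power_mult_tt_power to_fract_eq_iff)
  then have "coeff (monom (monom (1::rat) a) k) k = coeff (monom (monom 1 b) l) k" by simp
  then have kl: "k = l" by (cases "k = l") (auto simp: coeff_monom)
  with e have "coeff (monom (1::rat) a) a = coeff (monom 1 b) a" by (simp add: monom_eq_iff)
  then have "a = b" by (cases "a = b") (auto simp: coeff_monom)
  with kl show ?thesis by simp
qed

lemma qq_power_inj: "qq ^ a = qq ^ b \<longleftrightarrow> a = b"
  using qq_power_mult_tt_power_inj[of a 0 b 0] by auto

lemma qq_power_tt_power_neq:
  assumes "a \<noteq> b"
  shows "qq ^ a * inverse tt ^ k * tt ^ e \<noteq> qq ^ b * inverse tt ^ l"
proof
  assume "qq ^ a * inverse tt ^ k * tt ^ e = qq ^ b * inverse tt ^ l"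
  then have "qq ^ a * tt ^ (e + l) = qq ^ b * tt ^ k"
    by (simp add: field_simps power_add)
  then show False using qq_power_mult_tt_power_inj assms by blast
qed

lemma length_tilde [simp]: "length (tilde nu) = length nu"
  by (simp add: tilde_def)

lemma nth_tilde: "j < length nu \<Longrightarrow> tilde nu ! j = qq ^ (nu ! j) * inverse tt ^ kk nu j"
  by (simp add: tilde_def)

definition kk_set :: "nat list \<Rightarrow> nat \<Rightarrow> nat set" where
  "kk_set mu j = {y. y < length mu \<and> y \<noteq> j \<and> ((y < j \<and> mu ! y > mu ! j) \<or> (j < y \<and> mu ! y \<ge> mu ! j))}"

lemma kk_eq_card: "j < length mu \<Longrightarrow> kk mu j = card (kk_set mu j)"
proof -
  assume j: "j < length mu"
  have "kk_set mu j = {y. y < j \<and> mu ! y > mu ! j} \<union> {y. j < y \<and> y < length mu \<and> mu ! y \<ge> mu ! j}"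
    using j by (auto simp: kk_set_def)
  moreover have "card (\<dots>) = card {y. y < j \<and> mu ! y > mu ! j} + card {y. j < y \<and> y < length mu \<and> mu ! y \<ge> mu ! j}"
    by (rule card_Un_disjoint) auto
  ultimately show ?thesis by (simp add: kk_def)
qed

lemma kk_set_swap_list:
  assumes "Suc i < length nu" "nu ! i \<noteq> nu ! Suc i" "j < length nu"
  shows "kk_set (swap_list i nu) j = swp i ` kk_set nu (swp i j)"
proof -
  have "y \<in> kk_set (swap_list i nu) j \<longleftrightarrow> swp i y \<in> kk_set nu (swp i j)" for y
  proof (cases "(y = i \<and> j = Suc i) \<or> (y = Suc i \<and> j = i)")
    case True
    then show ?thesis using assms by (auto simp: kk_set_def nth_swap_list swp_def)
  next
    case False
    then have "swp i y < swp i j \<longleftrightarrow> y < j" "swp i j < swp i y \<longleftrightarrow> j < y" "swp i y = swp i j \<longleftrightarrow> y = j"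
      by (auto simp: swp_def)
    then show ?thesis
      using assms by (cases "y < length nu") (auto simp: kk_set_def nth_swap_list swp_less_iff)
  qed
  then show ?thesis by (simp add: set_eq_iff swp_image_iff)
qed

lemma kk_swap_list:
  assumes "Suc i < length nu" "nu ! i \<noteq> nu ! Suc i" "j < length nu"
  shows "kk (swap_list i nu) j = kk nu (swp i j)"
  using assms swp_less_iff[OF assms(1)]
  by (simp add: kk_eq_card kk_set_swap_list card_image inj_on_subset[OF inj_swp])

lemma tilde_swap_list:
  assumes "Suc i < length nu" "nu ! i \<noteq> nu ! Suc i"
  shows "tilde (swap_list i nu) = swap_list i (tilde nu)"
  using assms by (intro nth_equalityI) (auto simp: nth_tilde nth_swap_list kk_swap_list swp_less_iff)

lemma tt_mult_tilde_eq:
  assumes "Suc i < length nu" "nu ! i = nu ! Suc i"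
  shows "tt * tilde nu ! i = tilde nu ! Suc i"
proof -
  have "kk_set nu i = insert (Suc i) (kk_set nu (Suc i))"
    using assms by (auto simp: kk_set_def) (metis less_SucE nat_neq_iff)+
  moreover have "Suc i \<notin> kk_set nu (Suc i)" "finite (kk_set nu (Suc i))"
    by (simp_all add: kk_set_def)
  ultimately have "kk nu i = Suc (kk nu (Suc i))"
    using assms by (simp add: kk_eq_card)
  then show ?thesis
    using assms by (simp add: nth_tilde field_simps)
qed

lemma tilde_neq:
  assumes "Suc i < length nu" "nu ! i \<noteq> nu ! Suc i"
  shows "tilde nu ! i \<noteq> tilde nu ! Suc i" and "tt * tilde nu ! i \<noteq> tilde nu ! Suc i"
  using qq_power_tt_power_neq[OF assms(2), of "kk nu i" 0 "kk nu (Suc i)"]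
    qq_power_tt_power_neq[OF assms(2), of "kk nu i" 1 "kk nu (Suc i)"] assms
  by (simp_all add: nth_tilde mult_ac)

section \<open>Unisolvence on the grid \<open>(q\<^sup>\<nu>\<^sup>1, \<dots>, q\<^sup>\<nu>\<^sup>n)\<close>\<close>

definition comps_le :: "nat \<Rightarrow> nat \<Rightarrow> nat list set" where
  "comps_le n d = {nu. length nu = n \<and> sum_list nu \<le> d}"

lemma finite_comps_le: "finite (comps_le n d)"
proof -
  have "comps_le n d \<subseteq> {xs. set xs \<subseteq> {0..d} \<and> length xs = n}"
    by (auto simp: comps_le_def dest: member_le_sum_list)
  then show ?thesis by (rule finite_subset) (rule finite_lists_length_eq, simp)
qed

lemma lookup_expo: "Poly_Mapping.lookup (expo mu) i = (if i < length mu then mu ! i else 0)"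
  by (simp add: expo_def nth_default_def)

lemma keys_expo: "Poly_Mapping.keys (expo mu) \<subseteq> {..<length mu}"
  by (auto simp: in_keys_iff lookup_expo split: if_splits)

lemma mdeg_expo: "mdeg (expo mu) = sum_list mu"
proof -
  have "mdeg (expo mu) = (\<Sum>i\<in>{..<length mu}. Poly_Mapping.lookup (expo mu) i)"
    by (rule mdeg_superset) (auto simp: keys_expo)
  then show ?thesis
    by (simp add: lookup_expo sum_list_sum_nth atLeast0LessThan)
qed

lemma expo_inj: "length mu = length nu \<Longrightarrow> expo mu = expo nu \<Longrightarrow> mu = nu"
  by (metis lookup_expo nth_equalityI)

lemma expo_map_lookup:
  "Poly_Mapping.keys m \<subseteq> {..<n} \<Longrightarrow> expo (map (Poly_Mapping.lookup m) [0..<n]) = m"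
  by (intro poly_mapping_eqI) (auto simp: lookup_expo in_keys_iff)

lemma mcoeff_diff: "mcoeff (f - g) mu = mcoeff f mu - mcoeff g mu"
  by (simp add: mcoeff_def lookup_minus)

lemma mcoeff_sum_scal: "mcoeff (\<Sum>x\<in>A. scal (c x) (F x)) mu = (\<Sum>x\<in>A. c x * mcoeff (F x) mu)"
  by (simp add: mcoeff_def lookup_sum lookup_scal)

lemma polys_deg_eq_0_if_mcoeff:
  assumes "f \<in> polys_deg n d" "\<forall>nu\<in>comps_le n d. mcoeff f nu = 0"
  shows "f = 0"
proof (rule ccontr)
  assume "f \<noteq> 0"
  then obtain m where m: "m \<in> Poly_Mapping.keys f" by fastforce
  define nu where "nu = map (Poly_Mapping.lookup m) [0..<n]"
  have "Poly_Mapping.keys m \<subseteq> {..<n}" "mdeg m \<le> d"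
    using assms(1) m by (auto simp: polys_deg_iff)
  then have "expo nu = m" "nu \<in> comps_le n d"
    by (auto simp: nu_def expo_map_lookup comps_le_def simp flip: mdeg_expo)
  then show False using assms(2) m by (auto simp: mcoeff_def in_keys_iff)
qed

lemma sum_list_eq_if_le:
  fixes mu nu :: "nat list"
  assumes "length mu = length nu" "\<forall>i<length mu. mu ! i \<le> nu ! i" "sum_list nu \<le> sum_list mu"
  shows "mu = nu"
proof (rule ccontr)
  assume "mu \<noteq> nu"
  then obtain i where i: "i < length mu" "mu ! i \<noteq> nu ! i" using assms(1) nth_equalityI by blast
  have "(\<Sum>j=0..<length mu. mu ! j) < (\<Sum>j=0..<length mu. nu ! j)"
    using assms(2) i by (intro sum_strict_mono_ex1) (auto intro!: bexI[of _ i] le_neq_implies_less)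
  then show False using assms by (simp add: sum_list_sum_nth)
qed

definition deg_lt :: "nat \<Rightarrow> mpoly \<Rightarrow> bool" where
  "deg_lt d p \<longleftrightarrow> (\<forall>m\<in>Poly_Mapping.keys p. mdeg m < d)"

lemma deg_lt_add: "deg_lt d p \<Longrightarrow> deg_lt d q \<Longrightarrow> deg_lt d (p + q)"
  unfolding deg_lt_def using keys_add[of p q] by blast

lemma mdeg_keys_mult:
  assumes "m \<in> Poly_Mapping.keys (p * q)"
  obtains k l where "k \<in> Poly_Mapping.keys p" "l \<in> Poly_Mapping.keys q" "mdeg m = mdeg k + mdeg l"
  using keys_mult[of p q] assms by (auto simp: mdeg_add)

lemma deg_lt_mult_leading:
  assumes "deg_lt D (P - Poly_Mapping.single M 1)" "mdeg M = D"
    and "deg_lt D' (P' - Poly_Mapping.single M' 1)" "mdeg M' = D'"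
  shows "deg_lt (D + D') (P * P' - Poly_Mapping.single (M + M') 1)"
proof -
  define R where "R = P - Poly_Mapping.single M 1"
  define R' where "R' = P' - Poly_Mapping.single M' 1"
  have "P * P' - Poly_Mapping.single (M + M') 1 =
      Poly_Mapping.single M 1 * R' + R * (Poly_Mapping.single M' 1 + R')"
    by (simp add: R_def R'_def mult_single algebra_simps)
  moreover have "deg_lt (D + D') (Poly_Mapping.single M 1 * R')"
    using assms by (auto simp: deg_lt_def R'_def elim: mdeg_keys_mult)
  moreover have "deg_lt (D + D') (R * (Poly_Mapping.single M' 1 + R'))"
    unfolding deg_lt_def
  proof
    fix m assume "m \<in> Poly_Mapping.keys (R * (Poly_Mapping.single M' 1 + R'))"
    then obtain k l where "k \<in> Poly_Mapping.keys R" "l \<in> Poly_Mapping.keys (Poly_Mapping.single M' 1 + R')"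
      "mdeg m = mdeg k + mdeg l" by (rule mdeg_keys_mult)
    moreover have "l = M' \<or> l \<in> Poly_Mapping.keys R'"
      using keys_add[of "Poly_Mapping.single M' (1::K)" R'] calculation(2) by auto
    then have "mdeg l \<le> D'"
      using assms(3,4) by (auto simp: deg_lt_def simp flip: R'_def)
    ultimately show "mdeg m < D + D'" using assms(1) by (auto simp: deg_lt_def R_def)
  qed
  ultimately show ?thesis by (simp add: deg_lt_add)
qed

lemma deg_lt_prod_leading:
  assumes "finite A" "\<And>x. x \<in> A \<Longrightarrow> deg_lt (D x) (P x - Poly_Mapping.single (M x) 1) \<and> mdeg (M x) = D x"
  shows "deg_lt (\<Sum>x\<in>A. D x) ((\<Prod>x\<in>A. P x) - Poly_Mapping.single (\<Sum>x\<in>A. M x) 1)"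
  using assms
proof (induction A rule: finite_induct)
  case (insert x A)
  have "mdeg (\<Sum>x\<in>A. M x) = (\<Sum>x\<in>A. D x)"
    using insert by (simp add: mdeg_sum)
  then show ?case
    using insert by (simp add: deg_lt_mult_leading)
qed (simp add: deg_lt_def)

definition qgrid :: "nat list \<Rightarrow> K list" where
  "qgrid nu = map (\<lambda>x. qq ^ x) nu"

text \<open>The Newton polynomial vanishes at \<open>q\<^sup>\<nu>\<close> whenever \<open>\<nu>\<^sub>i < \<mu>\<^sub>i\<close> for some \<open>i\<close>.\<close>
definition newton :: "nat list \<Rightarrow> mpoly" where
  "newton mu = (\<Prod>i<length mu. \<Prod>j<mu ! i. var i - mconst (qq ^ j))"

lemma polys_deg_newton: "newton mu \<in> polys_deg (length mu) (sum_list mu)"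
proof -
  have "newton mu \<in> polys_deg (length mu) (\<Sum>i<length mu. \<Sum>j<mu ! i. 1)"
    unfolding newton_def
    by (intro polys_deg_prod polys_deg_diff polys_deg_var polys_deg_mconst) auto
  then show ?thesis
    by (simp add: sum_list_sum_nth atLeast0LessThan)
qed

lemma sum_single_one: "(\<Sum>j<k. Poly_Mapping.single i (1::nat)) = Poly_Mapping.single i k"
  by (induction k) (simp_all flip: single_add)

lemma deg_lt_newton: "deg_lt (sum_list mu) (newton mu - Poly_Mapping.single (expo mu) 1)"
proof -
  have factor: "deg_lt (\<Sum>j<k. 1) ((\<Prod>j<k. var i - mconst (qq ^ j))
      - Poly_Mapping.single (\<Sum>j<k. Poly_Mapping.single i 1) 1)" for i k
    by (rule deg_lt_prod_leading) (auto simp: deg_lt_def var_def mconst_def)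
  have "deg_lt k ((\<Prod>j<k. var i - mconst (qq ^ j)) - Poly_Mapping.single (Poly_Mapping.single i k) 1)"
    for i k
    using factor[of k i] unfolding sum_single_one by simp
  then have "deg_lt (\<Sum>i<length mu. mu ! i)
      (newton mu - Poly_Mapping.single (\<Sum>i<length mu. Poly_Mapping.single i (mu ! i)) 1)"
    unfolding newton_def by (intro deg_lt_prod_leading) auto
  moreover have "(\<Sum>i<length mu. Poly_Mapping.single i (mu ! i)) = expo mu"
    by (rule poly_mapping_eqI) (auto simp: lookup_sum lookup_single when_def lookup_expo)
  ultimately show ?thesis
    by (simp add: sum_list_sum_nth atLeast0LessThan)
qed

lemma mcoeff_newton:
  assumes "length nu = length mu" "sum_list mu \<le> sum_list nu"
  shows "mcoeff (newton mu) nu = (if nu = mu then 1 else 0)"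
proof -
  have "expo nu \<notin> Poly_Mapping.keys (newton mu - Poly_Mapping.single (expo mu) 1)"
    using deg_lt_newton[of mu] assms by (auto simp: deg_lt_def mdeg_expo)
  moreover have "expo nu = expo mu \<longleftrightarrow> nu = mu"
    using assms(1) expo_inj[of nu mu] by auto
  ultimately show ?thesis
    by (auto simp: mcoeff_def in_keys_iff lookup_minus lookup_single when_def)
qed

lemma eval_newton_qgrid:
  assumes "length nu = length mu"
  shows "eval (newton mu) (qgrid nu) = (\<Prod>i<length mu. \<Prod>j<mu ! i. qq ^ (nu ! i) - qq ^ j)"
  using assms by (simp add: newton_def eval_prod eval_diff qgrid_def)

lemma eval_newton_qgrid_self: "eval (newton mu) (qgrid mu) \<noteq> 0"
  by (auto simp: eval_newton_qgrid prod_zero_iff qq_power_inj)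

lemma eval_newton_qgrid_eq_0:
  assumes "length nu = length mu" "sum_list nu \<le> sum_list mu" "nu \<noteq> mu"
  shows "eval (newton mu) (qgrid nu) = 0"
proof -
  have "\<not> (\<forall>i<length mu. mu ! i \<le> nu ! i)"
    using sum_list_eq_if_le[of mu nu] assms by auto
  then obtain i where "i < length mu" "nu ! i < mu ! i"
    by (auto simp: not_le)
  then have "(\<Prod>j<mu ! i. qq ^ (nu ! i) - qq ^ j) = 0"
    by (intro prod_zero) auto
  then show ?thesis
    using assms(1) \<open>i < length mu\<close> by (auto simp: eval_newton_qgrid)
qed

lemma triangular_mcoeff_newton:
  "triangular (\<lambda>nu. - int (sum_list nu)) (comps_le n d) (\<lambda>mu nu. mcoeff (newton mu) nu)"
  by (auto simp: triangular_def comps_le_def mcoeff_newton)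

lemma triangular_eval_newton:
  "triangular sum_list (comps_le n d) (\<lambda>mu nu. eval (newton mu) (qgrid nu))"
  by (auto simp: triangular_def comps_le_def eval_newton_qgrid_self eval_newton_qgrid_eq_0)

lemma newton_expansion:
  assumes "f \<in> polys_deg n d"
  shows "\<exists>c. f = (\<Sum>mu\<in>comps_le n d. scal (c mu) (newton mu))"
proof -
  obtain c where c: "\<forall>nu\<in>comps_le n d. mcoeff f nu = (\<Sum>mu\<in>comps_le n d. c mu * mcoeff (newton mu) nu)"
    using triangular_solve[OF finite_comps_le triangular_mcoeff_newton] by blast
  have "\<forall>mu\<in>comps_le n d. newton mu \<in> polys_deg n d"
    by (auto simp: comps_le_def intro: polys_deg_mono[OF polys_deg_newton])
  then have "f - (\<Sum>mu\<in>comps_le n d. scal (c mu) (newton mu)) = 0"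
    using assms c by (intro polys_deg_eq_0_if_mcoeff)
      (auto intro!: polys_deg_diff polys_deg_sum polys_deg_scal simp: mcoeff_diff mcoeff_sum_scal)
  then show ?thesis by auto
qed

lemma qgrid_unisolvent:
  assumes "f \<in> polys_deg n d" "\<forall>nu\<in>comps_le n d. eval f (qgrid nu) = 0"
  shows "f = 0"
proof -
  obtain c where f: "f = (\<Sum>mu\<in>comps_le n d. scal (c mu) (newton mu))"
    using newton_expansion[OF assms(1)] by blast
  have "\<forall>nu\<in>comps_le n d. (\<Sum>mu\<in>comps_le n d. c mu * eval (newton mu) (qgrid nu)) = 0"
    using assms(2) by (simp add: f eval_sum)
  then have "\<forall>mu\<in>comps_le n d. c mu = 0"
    by (rule triangular_independent[OF finite_comps_le triangular_eval_newton])
  then show ?thesis by (simp add: f)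
qed

lemma qgrid_unisolvent_except:
  assumes mu: "length mu = n" and f: "f \<in> polys_deg n (sum_list mu)" and "mcoeff f mu = 0"
    and z: "\<forall>nu\<in>comps_le n (sum_list mu). nu \<noteq> mu \<longrightarrow> eval f (qgrid nu) = 0"
  shows "f = 0"
proof -
  define a where "a = eval f (qgrid mu)"
  define b where "b = eval (newton mu) (qgrid mu)"
  define h where "h = scal b f - scal a (newton mu)"
  have "h = 0"
  proof (rule qgrid_unisolvent)
    show "h \<in> polys_deg n (sum_list mu)"
      unfolding h_def using f polys_deg_newton[of mu] mu by (intro polys_deg_diff polys_deg_scal) auto
    show "\<forall>nu\<in>comps_le n (sum_list mu). eval h (qgrid nu) = 0"
    proof
      fix nu assume "nu \<in> comps_le n (sum_list mu)"
      then show "eval h (qgrid nu) = 0"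
        using z eval_newton_qgrid_eq_0[of nu mu] mu
        by (cases "nu = mu") (auto simp: h_def eval_diff a_def b_def comps_le_def)
    qed
  qed
  then have "mcoeff h mu = 0" by (simp add: mcoeff_def)
  then have "a = 0"
    using assms(3) mcoeff_newton[of mu mu] by (simp add: h_def mcoeff_def lookup_minus lookup_scal)
  then have "\<forall>nu\<in>comps_le n (sum_list mu). eval f (qgrid nu) = 0"
    using z by (auto simp: a_def)
  then show ?thesis
    using qgrid_unisolvent[OF f] by blast
qed

section \<open>Unisolvence on the points \<open>\<nu>\<^sup>~\<close>\<close>

lemma common_denominator:
  fixes a :: "'x \<Rightarrow> K"
  assumes "finite A"
  obtains c P where "c \<noteq> 0" "\<forall>x\<in>A. a x * c = to_fract (P x)"
proof -
  have "\<exists>pd. a x = Fract (fst pd) (snd pd) \<and> snd pd \<noteq> 0" for x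
    by (cases "a x") auto
  then obtain pd where pd': "\<And>x. a x = Fract (fst (pd x)) (snd (pd x)) \<and> snd (pd x) \<noteq> 0"
    by metis
  define p where "p x = fst (pd x)" for x
  define d where "d x = snd (pd x)" for x
  have pd: "a x = Fract (p x) (d x)" "d x \<noteq> 0" for x
    using pd'[of x] by (simp_all add: p_def d_def)
  have P: "a x * to_fract (\<Prod>y\<in>A. d y) = to_fract (p x * (\<Prod>y\<in>A - {x}. d y))" if "x \<in> A" for x
  proof -
    have "a x * to_fract (\<Prod>y\<in>A. d y) = Fract (d x * (p x * (\<Prod>y\<in>A - {x}. d y))) (d x * 1)"
      by (simp add: pd(1) to_fract_def prod.remove[OF assms that] mult.left_commute)
    then show ?thesis
      by (simp only: mult_fract_cancel[OF pd(2)] to_fract_def)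
  qed
  have "to_fract (\<Prod>y\<in>A. d y) \<noteq> 0"
    using assms pd(2) by (simp add: to_fract_eq_0_iff)
  with P show ?thesis
    by (intro that[of _ "\<lambda>x. p x * (\<Prod>y\<in>A - {x}. d y)"]) auto
qed

lemma common_power_of_linear_factor:
  fixes p :: "'x \<Rightarrow> 'a::idom_divide poly"
  assumes "finite A" "A \<noteq> {}" "\<forall>x\<in>A. p x \<noteq> 0"
  obtains e r where "\<forall>x\<in>A. p x = [:-a, 1:] ^ e * r x" "\<exists>x\<in>A. poly (r x) a \<noteq> 0"
proof -
  define e where "e = Min ((\<lambda>x. order a (p x)) ` A)"
  have "e \<in> (\<lambda>x. order a (p x)) ` A"
    unfolding e_def using assms by (intro Min_in) auto
  then obtain x0 where x0: "x0 \<in> A" "order a (p x0) = e"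
    by blast
  define r where "r x = p x div [:-a, 1:] ^ e" for x
  have p: "p x = [:-a, 1:] ^ e * r x" if "x \<in> A" for x
  proof -
    have "e \<le> order a (p x)"
      unfolding e_def using assms that by (intro Min_le) auto
    then show ?thesis
      by (simp add: r_def order_divides)
  qed
  have "order a (p x0) = e + order a (r x0)"
    using p[OF x0(1)] assms(3) x0(1) by (metis order_mult order_power_n_n mult_zero_right)
  then have "order a (r x0) = 0" "r x0 \<noteq> 0"
    using x0 p[OF x0(1)] assms(3) by auto
  then have "poly (r x0) a \<noteq> 0" by (simp add: order_root)
  with p x0(1) show ?thesis
    by (intro that[of e r]) auto
qed

definition q_weight :: "nat list \<Rightarrow> (nat \<Rightarrow>\<^sub>0 nat) \<Rightarrow> nat" where
  "q_weight nu m = (\<Sum>i\<in>Poly_Mapping.keys m. nu ! i * Poly_Mapping.lookup m i)"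

definition t_weight :: "nat list \<Rightarrow> (nat \<Rightarrow>\<^sub>0 nat) \<Rightarrow> nat" where
  "t_weight nu m = (\<Sum>i\<in>Poly_Mapping.keys m. kk nu i * Poly_Mapping.lookup m i)"

lemma eval_monomial_tilde:
  assumes "Poly_Mapping.keys m \<subseteq> {..<length nu}"
  shows "eval_monomial m (tilde nu) = qq ^ q_weight nu m * inverse tt ^ t_weight nu m"
proof -
  have "eval_monomial m (tilde nu) = (\<Prod>i\<in>Poly_Mapping.keys m.
      qq ^ (nu ! i * Poly_Mapping.lookup m i) * inverse tt ^ (kk nu i * Poly_Mapping.lookup m i))"
    unfolding eval_monomial_def using assms
    by (intro prod.cong refl) (auto simp: nth_tilde power_mult_distrib power_mult)
  then show ?thesis
    by (simp add: prod.distrib q_weight_def t_weight_def power_sum)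
qed

lemma eval_monomial_qgrid:
  assumes "Poly_Mapping.keys m \<subseteq> {..<length nu}"
  shows "eval_monomial m (qgrid nu) = qq ^ q_weight nu m"
proof -
  have "eval_monomial m (qgrid nu) = (\<Prod>i\<in>Poly_Mapping.keys m. qq ^ (nu ! i * Poly_Mapping.lookup m i))"
    unfolding eval_monomial_def using assms
    by (intro prod.cong refl) (auto simp: qgrid_def power_mult)
  then show ?thesis
    by (simp add: q_weight_def power_sum)
qed

lemma const_poly_sum: "[:\<Sum>x\<in>A. g x:] = (\<Sum>x\<in>A. [:g x:])"
proof (induction A rule: infinite_finite_induct)
  case (insert x F)
  have "[:g x + sum g F:] = [:g x:] + [:sum g F:]" by (simp add: add_pCons)
  then show ?case using insert by simp
qed auto

text \<open>Multiplying by a power of \<open>t\<close> clears the negative powers of \<open>t\<close> in \<open>\<nu>\<^sup>~\<close>; then set \<open>t = 1\<close>.\<close>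
lemma specialised_sum_eq_0:
  assumes f: "f \<in> polys (length nu)"
    and c: "\<forall>m\<in>Poly_Mapping.keys f. Poly_Mapping.lookup f m * c = to_fract (R m)"
    and z: "eval f (tilde nu) = 0"
  shows "(\<Sum>m\<in>Poly_Mapping.keys f. poly (R m) 1 * [:0, 1:] ^ q_weight nu m) = 0"
proof -
  let ?K = "Poly_Mapping.keys f"
  let ?q = "[:[:0, 1:]:] :: rat poly poly" and ?t = "[:0, 1:] :: rat poly poly"
  define N where "N = (\<Sum>m\<in>?K. t_weight nu m)"
  have tt_powers: "inverse tt ^ t_weight nu m * tt ^ N = tt ^ (N - t_weight nu m)" if "m \<in> ?K" for m
  proof -
    have "t_weight nu m \<le> N" using that by (auto simp: N_def intro: member_le_sum)
    then have "tt ^ N = tt ^ t_weight nu m * tt ^ (N - t_weight nu m)"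
      by (simp flip: power_add)
    then show ?thesis by (simp add: field_simps)
  qed
  have "c * eval f (tilde nu) * tt ^ N = (\<Sum>m\<in>?K. (Poly_Mapping.lookup f m * c)
      * (qq ^ q_weight nu m * (inverse tt ^ t_weight nu m * tt ^ N)))"
    using f by (simp add: eval_eq_sum sum_distrib_left sum_distrib_right eval_monomial_tilde polys_def
        mult_ac cong: sum.cong)
  also have "\<dots> = (\<Sum>m\<in>?K. to_fract (R m * ?q ^ q_weight nu m * ?t ^ (N - t_weight nu m)))"
    using c tt_powers by (simp add: to_fract_mult to_fract_power mult.assoc flip: qq_eq tt_eq)
  also have "\<dots> = to_fract (\<Sum>m\<in>?K. R m * ?q ^ q_weight nu m * ?t ^ (N - t_weight nu m))"
    by (simp add: to_fract_sum)
  finally have "(\<Sum>m\<in>?K. R m * ?q ^ q_weight nu m * ?t ^ (N - t_weight nu m)) = 0"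
    using z by (simp add: to_fract_eq_0_iff)
  then have "poly (\<Sum>m\<in>?K. R m * ?q ^ q_weight nu m * ?t ^ (N - t_weight nu m)) 1 = 0"
    by simp
  then show ?thesis
    by (simp add: poly_sum)
qed

lemma eval_specialised_qgrid:
  assumes "f \<in> polys (length nu)"
  shows "eval (\<Sum>m\<in>Poly_Mapping.keys f. Poly_Mapping.single m (to_fract [:poly (R m) 1:])) (qgrid nu)
    = to_fract [:\<Sum>m\<in>Poly_Mapping.keys f. poly (R m) 1 * [:0, 1:] ^ q_weight nu m:]"
proof -
  have "to_fract [:poly (R m) 1:] * eval_monomial m (qgrid nu)
      = to_fract [:poly (R m) 1 * [:0, 1:] ^ q_weight nu m:]" if "m \<in> Poly_Mapping.keys f" for m
  proof -
    have "qq ^ q_weight nu m = to_fract [:[:0, 1:] ^ q_weight nu m:]"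
      by (simp add: qq_eq poly_const_pow flip: to_fract_power)
    then show ?thesis
      using that assms by (simp add: eval_monomial_qgrid polys_def mult.commute flip: to_fract_mult)
  qed
  then show ?thesis
    by (simp add: eval_sum eval_single to_fract_sum const_poly_sum)
qed

lemma specialisation_at_t_1:
  assumes f: "f \<in> polys n" "f \<noteq> 0"
  obtains F where "F \<noteq> 0" "Poly_Mapping.keys F \<subseteq> Poly_Mapping.keys f"
    "\<And>nu. length nu = n \<Longrightarrow> eval f (tilde nu) = 0 \<Longrightarrow> eval F (qgrid nu) = 0"
proof -
  let ?K = "Poly_Mapping.keys f"
  obtain c P where c: "c \<noteq> 0" "\<forall>m\<in>?K. Poly_Mapping.lookup f m * c = to_fract (P m)"
    by (rule common_denominator[where a = "Poly_Mapping.lookup f", OF finite_keys])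
  have P: "\<forall>m\<in>?K. P m \<noteq> 0"
    using c by (metis in_keys_iff mult_eq_0_iff to_fract_0)
  have K: "?K \<noteq> {}" using f(2) by simp
  obtain e R where R: "\<forall>m\<in>?K. P m = [:-1, 1:] ^ e * R m" "\<exists>m\<in>?K. poly (R m) 1 \<noteq> 0"
    by (rule common_power_of_linear_factor[where a = 1, OF finite_keys K P])
  define c' where "c' = c / to_fract ([:-1, 1:] ^ e)"
  have "to_fract ([:-1, 1:] ^ e) \<noteq> 0"
    by (simp add: to_fract_eq_0_iff)
  then have c': "\<forall>m\<in>?K. Poly_Mapping.lookup f m * c' = to_fract (R m)"
    using c(2) R(1) by (simp add: c'_def to_fract_mult)
  define F where "F = (\<Sum>m\<in>?K. Poly_Mapping.single m (to_fract [:poly (R m) 1:]))"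
  have lookup_F: "Poly_Mapping.lookup F m = (if m \<in> ?K then to_fract [:poly (R m) 1:] else 0)" for m
    unfolding F_def lookup_sum by (simp add: lookup_single when_def)
  show ?thesis
  proof
    obtain m0 where "m0 \<in> ?K" "poly (R m0) 1 \<noteq> 0"
      using R(2) by blast
    then have "Poly_Mapping.lookup F m0 \<noteq> 0"
      by (simp add: lookup_F to_fract_eq_0_iff)
    then show "F \<noteq> 0" by auto
    show "Poly_Mapping.keys F \<subseteq> ?K"
      by (auto simp: in_keys_iff lookup_F split: if_splits)
    show "eval F (qgrid nu) = 0" if "length nu = n" "eval f (tilde nu) = 0" for nu
      unfolding F_def using eval_specialised_qgrid[of f nu R] specialised_sum_eq_0[of f nu c' R] f(1) c' that
      by simp
  qed
qed

lemma tilde_unisolvent: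
  assumes f: "f \<in> polys_deg n d" and z: "\<forall>nu\<in>comps_le n d. eval f (tilde nu) = 0"
  shows "f = 0"
proof (rule ccontr)
  assume "f \<noteq> 0"
  then obtain F where F: "F \<noteq> 0" "Poly_Mapping.keys F \<subseteq> Poly_Mapping.keys f"
    "\<And>nu. length nu = n \<Longrightarrow> eval f (tilde nu) = 0 \<Longrightarrow> eval F (qgrid nu) = 0"
    using specialisation_at_t_1 f polys_deg_subset_polys by blast
  have "F = 0"
    using polys_deg_keys_subset[OF f F(2)] z F(3) by (intro qgrid_unisolvent) (auto simp: comps_le_def)
  then show False using F(1) by simp
qed

lemma tilde_unisolvent_except:
  assumes mu: "length mu = n" and f: "f \<in> polys_deg n (sum_list mu)" and "mcoeff f mu = 0"
    and z: "\<forall>nu\<in>comps_le n (sum_list mu). nu \<noteq> mu \<longrightarrow> eval f (tilde nu) = 0"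
  shows "f = 0"
proof (rule ccontr)
  assume "f \<noteq> 0"
  then obtain F where F: "F \<noteq> 0" "Poly_Mapping.keys F \<subseteq> Poly_Mapping.keys f"
    "\<And>nu. length nu = n \<Longrightarrow> eval f (tilde nu) = 0 \<Longrightarrow> eval F (qgrid nu) = 0"
    using specialisation_at_t_1 f polys_deg_subset_polys by blast
  have "mcoeff F mu = 0"
    using assms(3) F(2) by (auto simp: mcoeff_def in_keys_iff)
  then have "F = 0"
    using polys_deg_keys_subset[OF f F(2)] z F(3) mu
    by (intro qgrid_unisolvent_except) (auto simp: comps_le_def)
  then show False using F(1) by simp
qed

section \<open>The interpolation polynomials \<open>E\<^sup>*\<^sub>\<mu>\<close>\<close>

lemma mat_mult_vec_surj_if_inj:
  fixes A :: "'a::field mat"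
  assumes A: "A \<in> carrier_mat N N" and inj: "\<And>v. v \<in> carrier_vec N \<Longrightarrow> A *\<^sub>v v = 0\<^sub>v N \<Longrightarrow> v = 0\<^sub>v N"
    and y: "y \<in> carrier_vec N"
  shows "\<exists>v\<in>carrier_vec N. A *\<^sub>v v = y"
proof -
  have "det A \<noteq> 0"
    using det_0_iff_vec_prod_zero_field[OF A] inj by blast
  then have "A \<in> Units (ring_mat TYPE('a) N ())"
    by (rule det_non_zero_imp_unit[OF A])
  then obtain B where B: "B \<in> carrier_mat N N" "A * B = 1\<^sub>m N"
    by (auto simp: Units_def ring_mat_simps)
  then have "A *\<^sub>v (B *\<^sub>v y) = y"
    using A y by (simp flip: assoc_mult_mat_vec)
  then show ?thesis using B(1) y by (intro bexI[of _ "B *\<^sub>v y"]) auto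
qed

lemma linear_functionals_surj_if_inj:
  fixes \<phi> :: "nat \<Rightarrow> mpoly \<Rightarrow> K" and b :: "nat \<Rightarrow> mpoly"
  assumes add: "\<And>r f g. \<phi> r (f + g) = \<phi> r f + \<phi> r g" and scal: "\<And>r c f. \<phi> r (scal c f) = c * \<phi> r f"
    and inj: "\<And>v. \<forall>r<N. \<phi> r (\<Sum>c<N. scal (v c) (b c)) = 0 \<Longrightarrow> \<forall>c<N. v c = 0"
  shows "\<exists>v. \<forall>r<N. \<phi> r (\<Sum>c<N. scal (v c) (b c)) = y r"
proof -
  have \<phi>_sum: "\<phi> r (\<Sum>c<N. scal (v c) (b c)) = (\<Sum>c<N. v c * \<phi> r (b c))" for r v
  proof -
    have "\<phi> r 0 = 0" using add[of r 0 0] by simp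
    then have "\<phi> r (\<Sum>c\<in>C. scal (v c) (b c)) = (\<Sum>c\<in>C. v c * \<phi> r (b c))" for C
      by (induction C rule: infinite_finite_induct) (simp_all add: add scal)
    then show ?thesis .
  qed
  define A where "A = mat N N (\<lambda>(r, c). \<phi> r (b c))"
  have Av: "(A *\<^sub>v w) $ r = \<phi> r (\<Sum>c<N. scal (w $ c) (b c))" if "w \<in> carrier_vec N" "r < N" for w r
    using that by (simp add: A_def \<phi>_sum scalar_prod_def atLeast0LessThan mult.commute)
  have "\<exists>w\<in>carrier_vec N. A *\<^sub>v w = vec N y"
  proof (rule mat_mult_vec_surj_if_inj)
    fix w :: "K vec" assume w: "w \<in> carrier_vec N" "A *\<^sub>v w = 0\<^sub>v N"
    then have "\<forall>c<N. w $ c = 0"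
      using Av[OF w(1)] by (intro inj[of "\<lambda>c. w $ c"]) (metis index_zero_vec(1))
    then show "w = 0\<^sub>v N" using w(1) by (intro eq_vecI) auto
  qed (simp_all add: A_def)
  then obtain w where "w \<in> carrier_vec N" "A *\<^sub>v w = vec N y" by blast
  then show ?thesis
    using Av by (intro exI[of _ "\<lambda>c. w $ c"]) (metis index_vec)
qed

lemma mcoeff_sum_monomials:
  assumes "distinct xs" "\<forall>mu\<in>set xs. length mu = n" "c < length xs"
  shows "mcoeff (\<Sum>c'<length xs. scal (v c') (Poly_Mapping.single (expo (xs ! c')) 1)) (xs ! c) = v c"
proof -
  have "expo (xs ! c') = expo (xs ! c) \<longleftrightarrow> c' = c" if "c' < length xs" for c'
    using assms that expo_inj by (metis nth_eq_iff_index_eq nth_mem)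
  then have "mcoeff (\<Sum>c'<length xs. scal (v c') (Poly_Mapping.single (expo (xs ! c')) 1)) (xs ! c)
      = (\<Sum>c'<length xs. if c' = c then v c' else 0)"
    unfolding mcoeff_sum_scal by (intro sum.cong refl) (auto simp: mcoeff_def lookup_single when_def)
  then show ?thesis using assms(3) by simp
qed

lemma polys_deg_sum_monomials:
  assumes "set xs \<subseteq> comps_le n d"
  shows "(\<Sum>c<length xs. scal (v c) (Poly_Mapping.single (expo (xs ! c)) 1)) \<in> polys_deg n d"
proof (intro polys_deg_sum polys_deg_scal polys_deg_single)
  fix c assume "c \<in> {..<length xs}"
  then have "xs ! c \<in> comps_le n d"
    using assms by (meson lessThan_iff nth_mem subsetD)
  then have "length (xs ! c) = n" "sum_list (xs ! c) \<le> d"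
    by (simp_all add: comps_le_def)
  then show "Poly_Mapping.keys (expo (xs ! c)) \<subseteq> {..<n}" "mdeg (expo (xs ! c)) \<le> d"
    using keys_expo[of "xs ! c"] by (simp_all add: mdeg_expo)
qed

text \<open>The monomials \<open>x\<^sup>\<nu>\<close>, \<open>\<nu> \<in> comps_le n d\<close>, form a basis of \<open>P\<^sub>n\<^sup>(\<^sup>d\<^sup>)\<close>, so
  injectivity of the \<open>|comps_le n d|\<close> functionals implies surjectivity.\<close>
lemma polys_deg_functionals_surj:
  fixes \<phi> :: "nat list \<Rightarrow> mpoly \<Rightarrow> K"
  assumes add: "\<And>nu f g. \<phi> nu (f + g) = \<phi> nu f + \<phi> nu g" and scal: "\<And>nu c f. \<phi> nu (scal c f) = c * \<phi> nu f"
    and inj: "\<And>f. f \<in> polys_deg n d \<Longrightarrow> \<forall>nu\<in>comps_le n d. \<phi> nu f = 0 \<Longrightarrow> f = 0"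
  shows "\<exists>f\<in>polys_deg n d. \<forall>nu\<in>comps_le n d. \<phi> nu f = y nu"
proof -
  obtain xs where xs: "set xs = comps_le n d" "distinct xs"
    using finite_distinct_list[OF finite_comps_le] by blast
  define g where "g v = (\<Sum>c<length xs. scal (v c) (Poly_Mapping.single (expo (xs ! c)) 1))" for v
  have g: "g v \<in> polys_deg n d" for v
    unfolding g_def using xs(1) by (intro polys_deg_sum_monomials) simp
  have nodes: "nu \<in> comps_le n d \<longleftrightarrow> (\<exists>r<length xs. xs ! r = nu)" for nu
    unfolding xs(1)[symmetric] by (auto simp: in_set_conv_nth)
  have "\<exists>v. \<forall>r<length xs. \<phi> (xs ! r) (g v) = y (xs ! r)"
    unfolding g_def
  proof (rule linear_functionals_surj_if_inj)
    fix v assume "\<forall>r<length xs. \<phi> (xs ! r) (\<Sum>c<length xs. scal (v c) (Poly_Mapping.single (expo (xs ! c)) 1)) = 0"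
    then have "\<forall>nu\<in>comps_le n d. \<phi> nu (g v) = 0"
      using nodes by (auto simp: g_def)
    then have "g v = 0"
      by (rule inj[OF g])
    have len: "\<forall>mu\<in>set xs. length mu = n"
      using xs(1) by (simp add: comps_le_def)
    show "\<forall>c<length xs. v c = 0"
    proof (intro allI impI)
      fix c assume "c < length xs"
      then have "mcoeff (g v) (xs ! c) = v c"
        unfolding g_def by (rule mcoeff_sum_monomials[OF xs(2) len])
      with \<open>g v = 0\<close> show "v c = 0" by (simp add: mcoeff_def)
    qed
  qed (simp_all add: add scal)
  then obtain v where "\<forall>r<length xs. \<phi> (xs ! r) (g v) = y (xs ! r)" ..
  then have "\<forall>nu\<in>comps_le n d. \<phi> nu (g v) = y nu"
    using nodes by auto
  then show ?thesis using g by blast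
qed

lemma Estar_exists:
  assumes mu: "length mu = n"
  shows "\<exists>f\<in>polys_deg n (sum_list mu). mcoeff f mu = 1 \<and>
     (\<forall>nu\<in>comps n. sum_list nu \<le> sum_list mu \<and> nu \<noteq> mu \<longrightarrow> eval f (tilde nu) = 0)"
proof -
  define \<phi> where "\<phi> nu f = (if nu = mu then mcoeff f mu else eval f (tilde nu))" for nu f
  have "\<exists>f\<in>polys_deg n (sum_list mu). \<forall>nu\<in>comps_le n (sum_list mu). \<phi> nu f = (if nu = mu then 1 else 0)"
  proof (rule polys_deg_functionals_surj)
    fix f assume "f \<in> polys_deg n (sum_list mu)" "\<forall>nu\<in>comps_le n (sum_list mu). \<phi> nu f = 0"
    moreover have "mu \<in> comps_le n (sum_list mu)" using mu by (simp add: comps_le_def)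
    ultimately show "f = 0"
      by (intro tilde_unisolvent_except[OF mu]) (auto simp: \<phi>_def split: if_splits)
  qed (simp_all add: \<phi>_def mcoeff_def lookup_add lookup_scal eval_add)
  moreover have "mu \<in> comps_le n (sum_list mu)" using mu by (simp add: comps_le_def)
  ultimately show ?thesis
    by (auto simp: \<phi>_def comps_le_def comps_def split: if_splits)
qed

lemma Estar_spec:
  assumes "length mu = n"
  shows "Estar mu \<in> polys_deg n (sum_list mu)" and "mcoeff (Estar mu) mu = 1"
    and "\<And>nu. nu \<in> comps n \<Longrightarrow> sum_list nu \<le> sum_list mu \<Longrightarrow> nu \<noteq> mu \<Longrightarrow> eval (Estar mu) (tilde nu) = 0"
proof -
  let ?P = "\<lambda>f. f \<in> polys_deg (length mu) (sum_list mu) \<and> mcoeff f mu = 1 \<and>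
      (\<forall>nu \<in> comps (length mu). sum_list nu \<le> sum_list mu \<and> nu \<noteq> mu \<longrightarrow> eval f (tilde nu) = 0)"
  obtain f where f: "?P f" using Estar_exists[OF assms] assms by blast
  have "g = f" if g: "?P g" for g
  proof -
    have "g - f = 0"
      using f g assms
      by (intro tilde_unisolvent_except[OF assms]) 
        (auto intro: polys_deg_diff simp: mcoeff_diff eval_diff comps_le_def comps_def)
    then show ?thesis by simp
  qed
  then have "?P (Estar mu)"
    unfolding Estar_def by (rule theI[where P = ?P, OF f])
  then show "Estar mu \<in> polys_deg n (sum_list mu)" "mcoeff (Estar mu) mu = 1"
    "\<And>nu. nu \<in> comps n \<Longrightarrow> sum_list nu \<le> sum_list mu \<Longrightarrow> nu \<noteq> mu \<Longrightarrow> eval (Estar mu) (tilde nu) = 0"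
    using assms by auto
qed

lemma eval_Estar_self: "eval (Estar lam) (tilde lam) \<noteq> 0"
proof
  assume z: "eval (Estar lam) (tilde lam) = 0"
  have "Estar lam = 0"
    using z Estar_spec(1,3)[OF refl]
    by (intro tilde_unisolvent[where n = "length lam" and d = "sum_list lam"])
      (auto simp: comps_le_def comps_def)
  then show False using Estar_spec(2)[of lam "length lam"] by (simp add: mcoeff_def)
qed

section \<open>Reduced words\<close>

text \<open>\<open>inv_count \<mu>\<close> is the length of \<open>\<sigma>\<^sub>\<mu>\<close>, see \<open>redword_spec\<close>.\<close>
fun inv_count :: "nat list \<Rightarrow> nat" where
  "inv_count [] = 0"
| "inv_count (x # xs) = length (filter (\<lambda>y. x < y) xs) + inv_count xs"

lemma swp_Suc: "swp (Suc i) (Suc j) = Suc (swp i j)"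
  by (simp add: swp_def)

lemma swp_Suc_0: "swp (Suc i) 0 = 0"
  by (simp add: swp_def)

lemma swap_list_Cons_Cons: "swap_list 0 (x # y # zs) = y # x # zs"
proof (rule nth_equalityI)
  fix j assume "j < length (swap_list 0 (x # y # zs))"
  then show "swap_list 0 (x # y # zs) ! j = (y # x # zs) ! j"
    by (cases "j = 0"; cases "j = 1") (simp_all add: nth_swap_list swp_def nth_Cons')
qed simp

lemma swap_list_Cons: "Suc i < length xs \<Longrightarrow> swap_list (Suc i) (x # xs) = x # swap_list i xs"
proof (rule nth_equalityI)
  fix j assume "Suc i < length xs" "j < length (swap_list (Suc i) (x # xs))"
  then show "swap_list (Suc i) (x # xs) ! j = (x # swap_list i xs) ! j"
    by (cases j) (auto simp: nth_swap_list swp_Suc swp_Suc_0)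
qed simp

lemma swap_list_eq_list_update: "Suc i < length xs \<Longrightarrow> swap_list i xs = xs[i := xs ! Suc i, Suc i := xs ! i]"
proof (rule nth_equalityI)
  fix j assume "Suc i < length xs" "j < length (swap_list i xs)"
  then show "swap_list i xs ! j = xs[i := xs ! Suc i, Suc i := xs ! i] ! j"
    by (cases "j = i"; cases "j = Suc i") (simp_all add: nth_swap_list swp_def nth_list_update)
qed simp

lemma mset_swap_list: "Suc i < length xs \<Longrightarrow> mset (swap_list i xs) = mset xs"
proof -
  assume a: "Suc i < length xs"
  have "mset (xs[Suc i := xs ! i, i := xs ! Suc i]) = mset xs"
    using a by (intro mset_swap) auto
  moreover have "xs[Suc i := xs ! i, i := xs ! Suc i] = xs[i := xs ! Suc i, Suc i := xs ! i]"
    by (rule list_update_swap) simp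
  ultimately show ?thesis using a by (simp add: swap_list_eq_list_update)
qed

lemma sum_list_swap_list: "Suc i < length xs \<Longrightarrow> sum_list (swap_list i xs) = sum_list (xs :: nat list)"
  by (metis mset_swap_list sum_mset_sum_list)

lemma length_filter_eq_if_mset_eq: "mset xs = mset ys \<Longrightarrow> length (filter P xs) = length (filter P ys)"
  by (metis mset_filter size_mset)

lemma inv_count_swap_list:
  "Suc i < length xs \<Longrightarrow> inv_count (swap_list i xs) + (if xs ! i < xs ! Suc i then 1 else 0) =
     inv_count xs + (if xs ! Suc i < xs ! i then 1 else 0)"
proof (induction i arbitrary: xs)
  case 0
  then obtain x xs' where "xs = x # xs'" by (cases xs) auto
  moreover obtain y zs where "xs' = y # zs" using 0 calculation by (cases xs') auto
  ultimately have xs: "xs = x # y # zs" by simp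
  show ?case by (simp add: xs swap_list_Cons_Cons)
next
  case (Suc i)
  then obtain x xs' where xs: "xs = x # xs'" by (cases xs) auto
  have l: "Suc i < length xs'" using Suc.prems xs by simp
  have "length (filter ((<) x) (swap_list i xs')) = length (filter ((<) x) xs')"
    by (rule length_filter_eq_if_mset_eq) (simp add: mset_swap_list l)
  then show ?case using Suc.IH[OF l] by (simp add: xs swap_list_Cons l)
qed

lemma inv_count_swap_list_le: "Suc i < length xs \<Longrightarrow> inv_count (swap_list i xs) \<le> Suc (inv_count xs)"
  using inv_count_swap_list[of i xs] by (auto split: if_splits)

lemma inv_count_eq_0_iff: "inv_count xs = 0 \<longleftrightarrow> sorted (rev xs)"
proof (induction xs)
  case (Cons x xs)
  have "inv_count (x # xs) = 0 \<longleftrightarrow> (\<forall>y\<in>set xs. \<not> x < y) \<and> inv_count xs = 0"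
    by (simp add: filter_empty_conv)
  also have "\<dots> \<longleftrightarrow> sorted (rev (x # xs))"
    using Cons.IH by (auto simp: sorted_append not_less)
  finally show ?case .
qed simp

lemma wperm_Cons: "wperm (i # w) = swp i \<circ> wperm w"
  by (simp add: wperm_def)

lemma wperm_Nil: "wperm [] = id"
  by (simp add: wperm_def)

lemma bij_wperm: "bij (wperm w)"
proof (induction w)
  case Nil then show ?case by (simp only: wperm_Nil bij_id)
next
  case (Cons i w) then show ?case unfolding wperm_Cons by (rule bij_comp[OF _ bij_swp])
qed

lemma length_act [simp]: "length (act s mu) = length mu"
  by (simp add: act_def)

lemma act_wperm_Nil: "act (wperm []) lam = lam"
  by (simp add: act_def wperm_def map_nth)

lemma act_wperm_Cons:
  assumes "Suc i < length lam"
  shows "act (wperm (i # w)) lam = swap_list i (act (wperm w) lam)"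
proof -
  have iv: "Hilbert_Choice.inv (swp i \<circ> wperm w) = Hilbert_Choice.inv (wperm w) \<circ> swp i"
    by (simp add: o_inv_distrib bij_swp bij_wperm inv_swp)
  show ?thesis
  proof (rule nth_equalityI)
    fix j assume j: "j < length (act (wperm (i # w)) lam)"
    then have j': "swp i j < length lam" using assms swp_less_iff by simp
    show "act (wperm (i # w)) lam ! j = swap_list i (act (wperm w) lam) ! j"
      using j j' by (simp add: act_def wperm_Cons iv nth_swap_list)
  qed simp
qed

lemma act_wperm_in_rearr:
  assumes "w \<in> words (length lam)"
  shows "act (wperm w) lam \<in> rearr lam"
  using assms
proof (induction w)
  case Nil then show ?case by (simp add: act_wperm_Nil rearr_def)
next
  case (Cons i w)
  then have i: "Suc i < length lam" and w: "w \<in> words (length lam)" by (auto simp: words_def)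
  show ?case using Cons.IH[OF w] i by (simp add: act_wperm_Cons rearr_def mset_swap_list)
qed

lemma inv_count_act_wperm_le:
  assumes "w \<in> words (length lam)"
  shows "inv_count (act (wperm w) lam) \<le> length w + inv_count lam"
  using assms
proof (induction w)
  case Nil then show ?case by (simp add: act_wperm_Nil)
next
  case (Cons i w)
  then have i: "Suc i < length lam" and w: "w \<in> words (length lam)" by (auto simp: words_def)
  show ?case
    using Cons.IH[OF w] i inv_count_swap_list_le[of i "act (wperm w) lam"] by (simp add: act_wperm_Cons)
qed

lemma inv_count_partition: "is_partition lam \<Longrightarrow> inv_count lam = 0"
  by (simp add: is_partition_def inv_count_eq_0_iff)

lemma sorted_rearr_eq_partition:
  assumes "is_partition lam" "mu \<in> rearr lam" "sorted (rev mu)"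
  shows "mu = lam"
proof -
  have "sort (rev lam) = rev mu"
    using assms by (intro properties_for_sort) (auto simp: rearr_def)
  moreover have "sort (rev lam) = rev lam"
    using assms by (intro properties_for_sort) (auto simp: is_partition_def)
  ultimately show ?thesis by simp
qed

lemma word_of_length_inv_count:
  assumes "is_partition lam" "mu \<in> rearr lam"
  shows "\<exists>w\<in>words (length lam). act (wperm w) lam = mu \<and> length w = inv_count mu"
  using assms(2)
proof (induction "inv_count mu" arbitrary: mu)
  case 0
  then have "sorted (rev mu)" using inv_count_eq_0_iff by simp
  then have "mu = lam" using sorted_rearr_eq_partition[OF assms(1) "0.prems"] by simp
  then show ?case
    using inv_count_partition[OF assms(1)] by (intro bexI[of _ "[]"]) (auto simp: act_wperm_Nil words_def)
next
  case (Suc k mu)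
  have lmu: "length mu = length lam" using Suc.prems by (simp add: rearr_def)
  have "inv_count mu \<noteq> 0" using Suc.hyps(2) by linarith
  then have "\<not> sorted (rev mu)" by (simp add: inv_count_eq_0_iff)
  then obtain i where i: "Suc i < length mu" "mu ! i < mu ! Suc i"
    by (auto simp: sorted_rev_iff_nth_Suc not_le)
  define mu' where "mu' = swap_list i mu"
  have "inv_count mu' = k" using inv_count_swap_list[OF i(1)] i(2) Suc.hyps(2) by (simp add: mu'_def)
  moreover have "mu' \<in> rearr lam" using Suc.prems i by (simp add: mu'_def rearr_def mset_swap_list)
  ultimately have "\<exists>w\<in>words (length lam). act (wperm w) lam = mu' \<and> length w = inv_count mu'"
    using Suc.hyps(1)[of mu'] by simp
  then obtain w where w: "w \<in> words (length lam)" "act (wperm w) lam = mu'" "length w = k"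
    using \<open>inv_count mu' = k\<close> by blast
  have "act (wperm (i # w)) lam = mu" using i lmu w by (simp add: act_wperm_Cons mu'_def swap_list_swap_list)
  moreover have "i # w \<in> words (length lam)" using w i lmu by (simp add: words_def)
  ultimately show ?case using w Suc.hyps(2) by (intro bexI[of _ "i # w"]) auto
qed

lemma redword_spec:
  assumes "is_partition lam" "mu \<in> rearr lam"
  shows "redword lam mu \<in> words (length lam)" "act (wperm (redword lam mu)) lam = mu"
    "length (redword lam mu) = inv_count mu"
proof -
  define R where "R = (\<lambda>w. w \<in> words (length lam) \<and> act (wperm w) lam = mu \<and>
      (\<forall>w' \<in> words (length lam). act (wperm w') lam = mu \<longrightarrow> length w \<le> length w'))"
  have lower: "inv_count mu \<le> length w" if "w \<in> words (length lam)" "act (wperm w) lam = mu" for w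
    using inv_count_act_wperm_le[OF that(1)] that(2) inv_count_partition[OF assms(1)] by simp
  obtain w0 where "w0 \<in> words (length lam)" "act (wperm w0) lam = mu" "length w0 = inv_count mu"
    using word_of_length_inv_count[OF assms] by blast
  then have "R w0" using lower by (auto simp: R_def)
  then have R: "R (redword lam mu)"
    unfolding redword_def R_def[symmetric] by (rule someI)
  then show w: "redword lam mu \<in> words (length lam)" "act (wperm (redword lam mu)) lam = mu"
    by (simp_all add: R_def)
  have "length (redword lam mu) \<le> length w0"
    using R \<open>R w0\<close> by (simp add: R_def)
  then show "length (redword lam mu) = inv_count mu"
    using lower[OF w] \<open>length w0 = inv_count mu\<close> by simp
qed

lemma rev_sort_rearr:
  assumes "is_partition lam" "mu \<in> rearr lam"
  shows "rev (sort mu) = lam"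
proof -
  have "sort mu = rev lam"
    using assms by (intro properties_for_sort) (auto simp: rearr_def is_partition_def)
  then show ?thesis by simp
qed

lemma fstar_eq_Tword:
  assumes "is_partition lam" "mu \<in> rearr lam"
  shows "fstar mu = Tword (redword lam mu) (Estar lam)"
  using rev_sort_rearr[OF assms] by (simp add: fstar_def)

lemma is_partition_rev_sort: "is_partition (rev (sort mu))"
  by (simp add: is_partition_def)

lemma in_rearr_rev_sort: "mu \<in> rearr (rev (sort mu))"
  by (simp add: rearr_def)

section \<open>Triangularity of the \<open>f\<^sup>*\<^sub>\<mu>\<close>\<close>

text \<open>If \<open>\<nu>\<^sub>i = \<nu>\<^sub>i\<^sub>+\<^sub>1\<close>, the factor \<open>t x\<^sub>i - x\<^sub>i\<^sub>+\<^sub>1\<close> of \<open>T\<^sub>i\<close> vanishes at \<open>\<nu>\<^sup>~\<close>; otherwise \<open>s\<^sub>i\<close> maps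
  \<open>\<nu>\<^sup>~\<close> to \<open>(s\<^sub>i \<nu>)\<^sup>~\<close>.\<close>
lemma eval_Top_tilde_eq_0:
  assumes f: "f \<in> polys n" and nu: "length nu = n" and i: "Suc i < n"
    and z: "eval f (tilde nu) = 0"
    and z_swap: "nu ! i \<noteq> nu ! Suc i \<Longrightarrow> eval f (tilde (swap_list i nu)) = 0"
  shows "eval (Top i f) (tilde nu) = 0"
proof (cases "nu ! i = nu ! Suc i")
  case True
  then have "tt * tilde nu ! i - tilde nu ! Suc i = 0"
    using tt_mult_tilde_eq[of i nu] nu i by simp
  then show ?thesis by (simp add: eval_Top z)
next
  case False
  have "(tilde nu ! i - tilde nu ! Suc i) * eval (ddiff i f) (tilde nu) = 0"
    using eval_ddiff[OF f _ i, of "tilde nu"] z z_swap[OF False] tilde_swap_list[of i nu] nu i False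
    by simp
  then have "eval (ddiff i f) (tilde nu) = 0"
    using tilde_neq(1)[of i nu] nu i False by simp
  then show ?thesis by (simp add: eval_Top z)
qed

lemma eval_Top_tilde_neq_0:
  assumes f: "f \<in> polys n" and nu: "length nu = n" and i: "Suc i < n"
    and neq: "nu ! i \<noteq> nu ! Suc i"
    and z: "eval f (tilde nu) = 0" and nz: "eval f (tilde (swap_list i nu)) \<noteq> 0"
  shows "eval (Top i f) (tilde nu) \<noteq> 0"
proof -
  have "(tilde nu ! i - tilde nu ! Suc i) * eval (ddiff i f) (tilde nu) = - eval f (tilde (swap_list i nu))"
    using eval_ddiff[OF f _ i, of "tilde nu"] z tilde_swap_list[of i nu] nu i neq by simp
  then have "eval (ddiff i f) (tilde nu) \<noteq> 0" using nz by auto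
  moreover have "tt * tilde nu ! i - tilde nu ! Suc i \<noteq> 0"
    using tilde_neq(2)[of i nu] nu i neq by simp
  ultimately show ?thesis by (simp add: eval_Top z)
qed

lemma Vstar_iff: "f \<in> Vstar lam \<longleftrightarrow> f \<in> polys_deg (length lam) (sum_list lam) \<and>
   (\<forall>nu\<in>comps (length lam). sum_list nu \<le> sum_list lam \<and> nu \<notin> rearr lam \<longrightarrow> eval f (tilde nu) = 0)"
  by (simp add: Vstar_def)

lemma Estar_in_Vstar: "Estar lam \<in> Vstar lam"
  using Estar_spec[of lam "length lam"] by (auto simp: Vstar_iff rearr_def)

lemma Top_in_Vstar:
  assumes f: "f \<in> Vstar lam" and i: "Suc i < length lam"
  shows "Top i f \<in> Vstar lam"
  unfolding Vstar_iff
proof (intro conjI ballI impI)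
  have f_deg: "f \<in> polys_deg (length lam) (sum_list lam)" using f by (simp add: Vstar_iff)
  then show "Top i f \<in> polys_deg (length lam) (sum_list lam)" using i by (rule polys_deg_Top)
  fix nu assume nu: "nu \<in> comps (length lam)" "sum_list nu \<le> sum_list lam \<and> nu \<notin> rearr lam"
  then have "swap_list i nu \<in> comps (length lam)" "sum_list (swap_list i nu) \<le> sum_list lam"
    "swap_list i nu \<notin> rearr lam"
    using i by (auto simp: comps_def sum_list_swap_list rearr_def mset_swap_list)
  then show "eval (Top i f) (tilde nu) = 0"
    using f nu f_deg polys_deg_subset_polys i
    by (intro eval_Top_tilde_eq_0[where n = "length lam"]) (auto simp: Vstar_iff comps_def)
qed

lemma Tword_in_Vstar: "f \<in> Vstar lam \<Longrightarrow> w \<in> words (length lam) \<Longrightarrow> Tword w f \<in> Vstar lam"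
  by (induction w) (auto simp: Tword_def words_def intro: Top_in_Vstar)

lemma fstar_in_Vstar:
  assumes "is_partition lam" "mu \<in> rearr lam"
  shows "fstar mu \<in> Vstar lam"
  using Tword_in_Vstar[OF Estar_in_Vstar redword_spec(1)[OF assms]] fstar_eq_Tword[OF assms] by simp

definition peak_at :: "nat list \<Rightarrow> nat list \<Rightarrow> mpoly \<Rightarrow> bool" where
  "peak_at lam mu g \<longleftrightarrow> eval g (tilde mu) \<noteq> 0 \<and>
     (\<forall>nu\<in>rearr lam. nu \<noteq> mu \<and> inv_count mu \<le> inv_count nu \<longrightarrow> eval g (tilde nu) = 0)"

lemma peak_at_Estar: "peak_at lam lam (Estar lam)"
  using eval_Estar_self Estar_spec(3)[of lam "length lam"]
  by (auto simp: peak_at_def rearr_def comps_def simp flip: sum_mset_sum_list)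

lemma peak_at_Top:
  assumes peak: "peak_at lam mu g" and g: "g \<in> polys n" and lam: "length lam = n"
    and mu: "mu \<in> rearr lam" and i: "Suc i < n" and desc: "mu ! Suc i < mu ! i"
  shows "peak_at lam (swap_list i mu) (Top i g)"
proof -
  have len_mu: "length mu = n" using mu lam by (simp add: rearr_def)
  have inv_swap: "inv_count (swap_list i mu) = Suc (inv_count mu)"
    using inv_count_swap_list[of i mu] i len_mu desc by simp
  have "swap_list i mu \<in> rearr lam" "swap_list i mu \<noteq> mu"
    using mu i len_mu desc inv_swap by (auto simp: rearr_def mset_swap_list)
  then have "eval g (tilde (swap_list i mu)) = 0"
    using peak inv_swap by (simp add: peak_at_def)
  moreover have "swap_list i mu ! i \<noteq> swap_list i mu ! Suc i"
    using desc i len_mu by (simp add: nth_swap_list swp_def)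
  ultimately have "eval (Top i g) (tilde (swap_list i mu)) \<noteq> 0"
    using eval_Top_tilde_neq_0[OF g _ i] peak len_mu i by (simp add: peak_at_def swap_list_swap_list)
  moreover have "eval (Top i g) (tilde nu) = 0"
    if nu: "nu \<in> rearr lam" "nu \<noteq> swap_list i mu" "inv_count (swap_list i mu) \<le> inv_count nu" for nu
  proof (rule eval_Top_tilde_eq_0[OF g _ i])
    show len_nu: "length nu = n" using nu lam by (simp add: rearr_def)
    show "eval g (tilde nu) = 0"
      using peak nu inv_swap by (auto simp: peak_at_def)
    have "swap_list i nu \<in> rearr lam" "swap_list i nu \<noteq> mu"
      using nu(1,2) swap_list_swap_list[of i nu] i len_nu by (auto simp: rearr_def mset_swap_list)
    moreover have "inv_count mu \<le> inv_count (swap_list i nu)"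
      using inv_count_swap_list[of i nu] i len_nu nu(3) inv_swap by (auto split: if_splits)
    ultimately show "eval g (tilde (swap_list i nu)) = 0"
      using peak by (simp add: peak_at_def)
  qed
  ultimately show ?thesis by (simp add: peak_at_def)
qed

lemma peak_at_Tword_Estar:
  assumes lam: "is_partition lam" "length lam = n"
  shows "w \<in> words n \<Longrightarrow> length w = inv_count (act (wperm w) lam) \<Longrightarrow>
    peak_at lam (act (wperm w) lam) (Tword w (Estar lam))"
proof (induction w)
  case Nil
  then show ?case using peak_at_Estar by (simp add: Tword_def act_wperm_Nil)
next
  case (Cons i w)
  have i: "Suc i < n" and w: "w \<in> words n" using Cons.prems by (auto simp: words_def)
  define mu where "mu = act (wperm w) lam"
  have len_mu: "length mu = n" and mu_rearr: "mu \<in> rearr lam"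
    using lam w act_wperm_in_rearr[of w lam] by (simp_all add: mu_def)
  have "inv_count mu \<le> length w"
    using inv_count_act_wperm_le[of w lam] w lam inv_count_partition[OF lam(1)] by (simp add: mu_def)
  moreover have "act (wperm (i # w)) lam = swap_list i mu"
    using i lam by (simp add: act_wperm_Cons mu_def)
  ultimately have desc: "mu ! Suc i < mu ! i" and "inv_count mu = length w"
    using inv_count_swap_list[of i mu] i len_mu Cons.prems(2) by (auto split: if_splits)
  then have "peak_at lam mu (Tword w (Estar lam))"
    using Cons.IH w by (simp add: mu_def)
  then show ?case
    using peak_at_Top[OF _ _ lam(2) mu_rearr i desc] polys_deg_Tword[OF Estar_spec(1)[OF lam(2)] w]
      polys_deg_subset_polys \<open>act (wperm (i # w)) lam = swap_list i mu\<close>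
    by (auto simp: Tword_def)
qed

lemma eval_fstar_rearr:
  assumes "is_partition lam" "mu \<in> rearr lam"
  shows "eval (fstar mu) (tilde mu) \<noteq> 0"
    and "nu \<in> rearr lam \<Longrightarrow> nu \<noteq> mu \<Longrightarrow> inv_count mu \<le> inv_count nu \<Longrightarrow> eval (fstar mu) (tilde nu) = 0"
  using peak_at_Tword_Estar[OF assms(1) refl, of "redword lam mu"] redword_spec[OF assms]
    fstar_eq_Tword[OF assms]
  by (auto simp: peak_at_def)

lemma fstar_polys_deg: "fstar mu \<in> polys_deg (length mu) (sum_list mu)"
  using fstar_in_Vstar[OF is_partition_rev_sort in_rearr_rev_sort, of mu]
  by (simp add: Vstar_iff sum_mset_sum_list[symmetric])

lemma eval_fstar_eq_0:
  assumes "length nu = length mu" "sum_list nu \<le> sum_list mu" "mset nu \<noteq> mset mu"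
  shows "eval (fstar mu) (tilde nu) = 0"
  using fstar_in_Vstar[OF is_partition_rev_sort in_rearr_rev_sort, of mu] assms
  by (simp add: Vstar_iff comps_def rearr_def sum_mset_sum_list[symmetric])

definition fstar_rank :: "nat list \<Rightarrow> nat \<times> int" where
  "fstar_rank nu = (sum_list nu, - int (inv_count nu))"

lemma triangular_fstar: "triangular fstar_rank (comps n) (\<lambda>mu nu. eval (fstar mu) (tilde nu))"
  unfolding triangular_def
proof (intro conjI ballI impI)
  fix mu assume "mu \<in> comps n"
  then show "eval (fstar mu) (tilde mu) \<noteq> 0"
    using eval_fstar_rearr(1)[OF is_partition_rev_sort in_rearr_rev_sort] by simp
next
  fix mu nu assume comps: "mu \<in> comps n" "nu \<in> comps n"
    and "nu \<noteq> mu \<and> fstar_rank nu \<le> fstar_rank mu"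
  then have neq: "nu \<noteq> mu" and rank: "sum_list nu < sum_list mu \<or>
      sum_list nu = sum_list mu \<and> inv_count mu \<le> inv_count nu"
    by (auto simp: fstar_rank_def less_eq_prod_def)
  show "eval (fstar mu) (tilde nu) = 0"
  proof (cases "mset nu = mset mu")
    case True
    then have "nu \<in> rearr (rev (sort mu))" "sum_list nu = sum_list mu"
      using comps by (auto simp: rearr_def comps_def sum_mset_sum_list[symmetric])
    then show ?thesis
      using eval_fstar_rearr(2)[OF is_partition_rev_sort in_rearr_rev_sort] neq rank by auto
  next
    case False
    then show ?thesis using comps rank by (intro eval_fstar_eq_0) (auto simp: comps_def)
  qed
qed

lemma fstar_independent:
  assumes "finite S" "S \<subseteq> comps n" "(\<Sum>mu\<in>S. scal (c mu) (fstar mu)) = 0"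
  shows "\<forall>mu\<in>S. c mu = 0"
proof (rule triangular_independent[OF assms(1) triangular_subset[OF triangular_fstar assms(2)]])
  show "\<forall>nu\<in>S. (\<Sum>mu\<in>S. c mu * eval (fstar mu) (tilde nu)) = 0"
    using arg_cong[OF assms(3), of "\<lambda>f. eval f (tilde _)"] by (simp add: eval_sum)
qed

lemma fstar_span:
  assumes D: "D \<subseteq> comps_le n d" and g: "g \<in> polys_deg n d"
    and g_zero: "\<forall>nu\<in>comps_le n d - D. eval g (tilde nu) = 0"
    and fstar_D: "\<forall>mu\<in>D. fstar mu \<in> polys_deg n d \<and> (\<forall>nu\<in>comps_le n d - D. eval (fstar mu) (tilde nu) = 0)"
  shows "\<exists>c. g = (\<Sum>mu\<in>D. scal (c mu) (fstar mu))"
proof -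
  have "finite D" using D finite_comps_le by (rule finite_subset)
  moreover have "D \<subseteq> comps n" using D by (auto simp: comps_le_def comps_def)
  ultimately obtain c where c: "\<forall>nu\<in>D. eval g (tilde nu) = (\<Sum>mu\<in>D. c mu * eval (fstar mu) (tilde nu))"
    using triangular_solve[where \<phi> = "\<lambda>nu. eval g (tilde nu)", OF _ triangular_subset[OF triangular_fstar]]
    by blast
  define h where "h = g - (\<Sum>mu\<in>D. scal (c mu) (fstar mu))"
  have "h = 0"
  proof (rule tilde_unisolvent)
    show "h \<in> polys_deg n d"
      unfolding h_def using g fstar_D by (intro polys_deg_diff polys_deg_sum polys_deg_scal) auto
    show "\<forall>nu\<in>comps_le n d. eval h (tilde nu) = 0"
      using c g_zero fstar_D by (auto simp: h_def eval_diff eval_sum)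
  qed
  then show ?thesis by (auto simp: h_def)
qed

lemma in_polys_deg_sum_mdeg: "f \<in> polys n \<Longrightarrow> f \<in> polys_deg n (\<Sum>m\<in>Poly_Mapping.keys f. mdeg m)"
  by (auto simp: polys_deg_def polys_def intro: member_le_sum)

theorem is_basis_family_fstar_Vstar:
  assumes "is_partition lam"
  shows "is_basis_family fstar (rearr lam) (Vstar lam)"
  unfolding is_basis_family_def
proof (intro conjI allI impI ballI)
  show "fstar mu \<in> Vstar lam" if "mu \<in> rearr lam" for mu
    using fstar_in_Vstar[OF assms that] .
  have rearr: "rearr lam \<subseteq> comps_le (length lam) (sum_list lam)"
    by (auto simp: rearr_def comps_le_def sum_mset_sum_list[symmetric])
  then show "c mu = 0"
    if "finite S \<and> S \<subseteq> rearr lam \<and> (\<Sum>mu\<in>S. scal (c mu) (fstar mu)) = 0" "mu \<in> S" for S c mu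
    using fstar_independent[of S "length lam" c] that by (auto simp: comps_le_def comps_def)
  fix g assume g: "g \<in> Vstar lam"
  have "\<forall>mu\<in>rearr lam. fstar mu \<in> polys_deg (length lam) (sum_list lam) \<and>
      (\<forall>nu\<in>comps_le (length lam) (sum_list lam) - rearr lam. eval (fstar mu) (tilde nu) = 0)"
    using fstar_in_Vstar[OF assms] by (simp add: Vstar_iff comps_le_def comps_def)
  moreover have "g \<in> polys_deg (length lam) (sum_list lam)"
    "\<forall>nu\<in>comps_le (length lam) (sum_list lam) - rearr lam. eval g (tilde nu) = 0"
    using g by (simp_all add: Vstar_iff comps_le_def comps_def)
  ultimately obtain c where "g = (\<Sum>mu\<in>rearr lam. scal (c mu) (fstar mu))"
    using fstar_span[OF rearr] by blast
  moreover have "finite (rearr lam)"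
    using finite_subset[OF rearr finite_comps_le] .
  ultimately show "\<exists>S c. finite S \<and> S \<subseteq> rearr lam \<and> g = (\<Sum>mu\<in>S. scal (c mu) (fstar mu))"
    by blast
qed

theorem is_basis_family_fstar_polys: "is_basis_family fstar (comps n) (polys n)"
  unfolding is_basis_family_def
proof (intro conjI allI impI ballI)
  show "fstar mu \<in> polys n" if "mu \<in> comps n" for mu
    using fstar_polys_deg[of mu] polys_deg_subset_polys that by (auto simp: comps_def)
  show "c mu = 0" if "finite S \<and> S \<subseteq> comps n \<and> (\<Sum>mu\<in>S. scal (c mu) (fstar mu)) = 0" "mu \<in> S" for S c mu
    using fstar_independent[of S n c] that by auto
  fix g assume "g \<in> polys n"
  then have g: "g \<in> polys_deg n (\<Sum>m\<in>Poly_Mapping.keys g. mdeg m)" (is "_ \<in> polys_deg n ?d")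
    by (rule in_polys_deg_sum_mdeg)
  have "\<forall>mu\<in>comps_le n ?d. fstar mu \<in> polys_deg n ?d"
    using fstar_polys_deg by (auto simp: comps_le_def intro: polys_deg_mono)
  then obtain c where "g = (\<Sum>mu\<in>comps_le n ?d. scal (c mu) (fstar mu))"
    using fstar_span[OF subset_refl g] by blast
  moreover have "comps_le n ?d \<subseteq> comps n"
    by (auto simp: comps_le_def comps_def)
  ultimately show "\<exists>S c. finite S \<and> S \<subseteq> comps n \<and> g = (\<Sum>mu\<in>S. scal (c mu) (fstar mu))"
    using finite_comps_le by blast
qed

theorem proposition2p14:
  fixes lam :: "nat list" and n :: nat
  assumes "length lam = n" and "is_partition lam"
  shows "is_basis_family fstar (rearr lam) (Vstar lam)
         \<and> is_basis_family fstar (comps n) (polys n)"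
  using is_basis_family_fstar_Vstar[OF assms(2)] is_basis_family_fstar_polys by blast

end
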